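(* Let $\mu^s$ be a positive sampling policy and let $(\mu^t)_{t\in[T]}$ be any sequence of min-player policies with $\mu^t$ $\mathcal F^{t-1}$-measurable. Then for every $\delta\in(0,1)$, with probability at least $1-\delta$, \[\mathcal R^T_{\min}\le\max\{\hat{\mathcal R}^T_{\min},0\}+4\sqrt{\iota H\kappa(\mu^s)T},\qquad \iota=\log\big((A_{\mathcal X}+1)/\delta\big).\]
   Context: Game structure. Fix an integer $H\ge1$. The min-player's information sets form a finite set $\mathcal X$; each $x\in\mathcal X$ has a depth $h(x)\in\{1,\dots,H\}$ and a finite nonempty action set $\mathcal A(x)$. Perfect recall: every $x$ of depth $h$ has a unique history $(x_1,a_1,\dots,x_{h-1},a_{h-1},x_h=x)$ with $x_i$ of depth $i$ and $a_i\in\mathcal A(x_i)$. $A_{\mathcal X}=\sum_{x}|\mathcal A(x)|$. A policy is $\mu=(\mu(\cdot|x))_{x\in\mathcal X}$ with $\mu(\cdot|x)\in\Delta_{\mathcal A(x)}$; $\Pi_{\min}$ is the set of policies; $\mu$ is positive if $\mu(a|x)>0$ for all $x,a$. For $x$ of depth $h$ with history $(x_1,a_1,\dots,x_h=x)$ and $a\in\mathcal A(x)$, putting $a_h=a$, the realization plan is $\mu_{1:}(x,a)=\prod_{i=1}^h\mu(a_i|x_i)$. $\langle\cdot,\cdot\rangle$ is the standard inner product on $\mathbb R^{A_{\mathcal X}}$ indexed by pairs $(x,a)$. For positive $\mu^s$, $\kappa(\mu^s)=\max_{\mu\in\Pi_{\min}}\sum_{x\in\mathcal X}\sum_{a\in\mathcal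 A(x)}\mu_{1:}(x,a)/\mu^s_{1:}(x,a)$. Episodes and protocol. For each max-player policy $\nu$ there are numbers $p^\nu_{1:}(x)\in[0,1]$ and $\ell^\nu_h(x,a)\in[0,1]$ ($x$ of depth $h$) such that an episode played with min-player policy $\mu$ against $\nu$ produces a random trajectory $(x_1,a_1,\ell_1,\dots,x_H,a_H,\ell_H)$ with $x_h$ of depth $h$, $a_h\in\mathcal A(x_h)$, $\ell_h\in[0,1]$, and for every $x$ of depth $h$ and $a\in\mathcal A(x)$: $\mathbb P(x_h=x,a_h=a)=p^\nu_{1:}(x)\mu_{1:}(x,a)$ and $\mathbb E[\ell_h\mathbf 1\{x_h=x,a_h=a\}]=p^\nu_{1:}(x)\mu_{1:}(x,a)\ell^\nu_h(x,a)$. Set $\ell^\nu(x,a)=p^\nu_{1:}(x)\ell^\nu_h(x,a)$. Fix a filtration $(\mathcal F^t)_{t=0}^T$. At each round $t=1,\dots,T$, a max-player policy $\nu^t$ is $\mathcal F^{t-1}$-measurable; conditionally on $\mathcal F^{t-1}$ the min-player observes a trajectory $(x^t_h,a^t_h,\ell^t_h)_{h\le H}$ distributed as an episode played with $(\mu^s,\nu^t)$, and it is $\mathcal F^t$-measurable. Set $\ell^t=\ell^{\nu^t}$ and $\mathcal R^T_{\min}=\max_{\mu^\dagger\in\Pi_{\min}}\sum_{t=1}^T\langle\ell^t,\mu^t_{1:}-\mu^\dagger_{1:}\rangle$. The estimated loss is $\hat\ell^t(x,a)=\mathbf 1\{x=x^t_h,a=a^t_h\}\ell^t_h/\mu^s_{1:}(x,a)$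 for $x$ of depth $h$, and the estimated regret is $\hat{\mathcal R}^T_{\min}=\max_{\mu^\dagger\in\Pi_{\min}}\sum_{t=1}^T\langle\hat\ell^t,\mu^t_{1:}-\mu^\dagger_{1:}\rangle$. *)

theory Defs
  imports "HOL-Probability.Probability"
begin

text \<open>X: information sets; Act x: action set of x; dep x: depth of x; H: horizon;
  hist x: the unique history [(x_1,a_1),...,(x_{h-1},a_{h-1})] of x (perfect recall).\<close>

definition game_struct ::
  "'x set \<Rightarrow> ('x \<Rightarrow> 'a set) \<Rightarrow> ('x \<Rightarrow> nat) \<Rightarrow> nat \<Rightarrow> ('x \<Rightarrow> ('x \<times> 'a) list) \<Rightarrow> bool" where
  "game_struct X Act dep H hist \<longleftrightarrow>
     H \<ge> 1 \<and> finite X \<and>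
     (\<forall>x\<in>X. finite (Act x) \<and> Act x \<noteq> {} \<and> 1 \<le> dep x \<and> dep x \<le> H) \<and>
     (\<forall>x\<in>X. length (hist x) = dep x - 1 \<and>
        (\<forall>i < length (hist x).
            fst (hist x ! i) \<in> X \<and> dep (fst (hist x ! i)) = i + 1 \<and>
            snd (hist x ! i) \<in> Act (fst (hist x ! i)) \<and>
            hist (fst (hist x ! i)) = take i (hist x)))"

definition policies :: "'x set \<Rightarrow> ('x \<Rightarrow> 'a set) \<Rightarrow> ('x \<Rightarrow> 'a \<Rightarrow> real) set" where
  "policies X Act = {mu. \<forall>x\<in>X. (\<forall>a\<in>Act x. mu x a \<ge> 0) \<and> (\<Sum>a\<in>Act x. mu x a) = 1}"

definition positive_policy :: "'x set \<Rightarrow> ('x \<Rightarrow> 'a set) \<Rightarrow> ('x \<Rightarrow> 'a \<Rightarrow> real) \<Rightarrow> bool" where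
  "positive_policy X Act mu \<longleftrightarrow> mu \<in> policies X Act \<and> (\<forall>x\<in>X. \<forall>a\<in>Act x. mu x a > 0)"

definition real_plan :: "('x \<Rightarrow> ('x \<times> 'a) list) \<Rightarrow> ('x \<Rightarrow> 'a \<Rightarrow> real) \<Rightarrow> 'x \<Rightarrow> 'a \<Rightarrow> real" where
  "real_plan hist mu x a = prod_list (map (\<lambda>(y, b). mu y b) (hist x)) * mu x a"

definition ip :: "'x set \<Rightarrow> ('x \<Rightarrow> 'a set) \<Rightarrow> ('x \<Rightarrow> 'a \<Rightarrow> real) \<Rightarrow> ('x \<Rightarrow> 'a \<Rightarrow> real) \<Rightarrow> real" where
  "ip X Act f g = (\<Sum>x\<in>X. \<Sum>a\<in>Act x. f x a * g x a)"

definition num_actions :: "'x set \<Rightarrow> ('x \<Rightarrow> 'a set) \<Rightarrow> nat" where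
  "num_actions X Act = (\<Sum>x\<in>X. card (Act x))"

definition kappa ::
  "'x set \<Rightarrow> ('x \<Rightarrow> 'a set) \<Rightarrow> ('x \<Rightarrow> ('x \<times> 'a) list) \<Rightarrow> ('x \<Rightarrow> 'a \<Rightarrow> real) \<Rightarrow> real" where
  "kappa X Act hist mus =
     (SUP mu \<in> policies X Act. \<Sum>x\<in>X. \<Sum>a\<in>Act x. real_plan hist mu x a / real_plan hist mus x a)"

definition regret ::
  "'x set \<Rightarrow> ('x \<Rightarrow> 'a set) \<Rightarrow> ('x \<Rightarrow> ('x \<times> 'a) list) \<Rightarrow> nat \<Rightarrow>
   (nat \<Rightarrow> 'x \<Rightarrow> 'a \<Rightarrow> real) \<Rightarrow> (nat \<Rightarrow> 'x \<Rightarrow> 'a \<Rightarrow> real) \<Rightarrow> real" where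
  "regret X Act hist T loss mu =
     (SUP mu' \<in> policies X Act. \<Sum>t\<in>{1..T}.
        ip X Act (loss t) (\<lambda>x a. real_plan hist (mu t) x a - real_plan hist mu' x a))"

end

theory Submission
  imports Defs
begin

text \<open>
  Two families of exponential supermartingales compare the true with the estimated losses.
  Along the iterates, the difference between true and estimated loss is a martingale difference
  sequence whose conditional second moment is at most \<open>H \<kappa>(\<mu>\<^sup>s)\<close>: an episode visits at most
  \<open>H\<close> information sets, and the realization plan of any policy divided by that of \<open>\<mu>\<^sup>s\<close> sums to at
  most \<open>\<kappa>(\<mu>\<^sup>s)\<close>. For each pair \<open>(x, a)\<close>, the cumulative estimated loss exceeds \<open>1 + \<gamma>\<close> times the
  cumulative true loss by at most \<open>\<iota> / (\<gamma> \<mu>\<^sup>s\<^sub>1\<^sub>:(x, a))\<close>. Each of these \<open>A\<^sub>X + 1\<close> events fails with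
  probability at most \<open>exp (- \<iota>) = \<delta> / (A\<^sub>X + 1)\<close> by Ville's inequality. Outside their union the
  regret against every comparator policy is bounded deterministically; since the regret is a
  maximum over the finitely many pure policies, it is also measurable.
\<close>

lemma exp_minus_le_quadratic:
  fixes y :: real
  assumes "0 \<le> y"
  shows "exp (- y) \<le> 1 - y + y\<^sup>2 / 2"
proof -
  let ?g = "\<lambda>y::real. 1 - y + y\<^sup>2 / 2 - exp (- y)"
  have "?g 0 \<le> ?g y"
  proof (rule DERIV_nonneg_imp_increasing_open[OF assms])
    fix x :: real
    have "DERIV ?g x :> - 1 + x + exp (- x)"
      by (auto intro!: derivative_eq_intros simp: power2_eq_square algebra_simps)
    moreover have "0 \<le> - 1 + x + exp (- x)"
      using exp_ge_add_one_self[of "- x"] by simp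
    ultimately show "\<exists>d. DERIV ?g x :> d \<and> 0 \<le> d" by blast
  qed (intro continuous_intros, auto)
  then show ?thesis by simp
qed

lemma exp_diff_le_affine:
  fixes \<eta> W V h :: real
  assumes "0 \<le> \<eta>" and "0 \<le> W" and "W\<^sup>2 \<le> h * V"
  shows "exp (\<alpha> - \<eta> * W) \<le> exp \<alpha> * (1 - \<eta> * W + \<eta>\<^sup>2 * h / 2 * V)"
proof -
  have "exp (- (\<eta> * W)) \<le> 1 - \<eta> * W + (\<eta> * W)\<^sup>2 / 2"
    using assms by (intro exp_minus_le_quadratic) simp
  also have "(\<eta> * W)\<^sup>2 / 2 \<le> \<eta>\<^sup>2 * h / 2 * V"
    using mult_left_mono[OF assms(3), of "\<eta>\<^sup>2"] by (simp add: power_mult_distrib mult.assoc)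
  finally have "exp \<alpha> * exp (- (\<eta> * W)) \<le> exp \<alpha> * (1 - \<eta> * W + \<eta>\<^sup>2 * h / 2 * V)"
    by simp
  then show ?thesis
    by (simp add: exp_add[symmetric])
qed

lemma exp_mult_affine_le_one:
  fixes u q V K :: real
  assumes "0 \<le> q" and "V \<le> K"
  shows "exp (u - q * K) * (1 - u + q * V) \<le> 1"
proof -
  have "1 - u + q * V \<le> exp (q * K - u)"
    using exp_ge_add_one_self[of "q * K - u"] mult_left_mono[OF assms(2,1)] by linarith
  then have "exp (u - q * K) * (1 - u + q * V) \<le> exp (u - q * K) * exp (q * K - u)"
    by (rule mult_left_mono) simp
  also have "\<dots> = 1"
    by (simp add: exp_add[symmetric])
  finally show ?thesis .
qed

lemma sum_if_le_card:
  fixes f :: "'p \<Rightarrow> real"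
  assumes "finite S" and "card {p \<in> S. C p} \<le> n" and "\<And>p. p \<in> S \<Longrightarrow> C p \<Longrightarrow> f p \<le> 1"
  shows "(\<Sum>p\<in>S. if C p then f p else 0) \<le> real n"
proof -
  have "(\<Sum>p\<in>S. if C p then f p else 0) = (\<Sum>p\<in>{p \<in> S. C p}. f p)"
    using assms(1) by (simp add: sum.inter_filter)
  also have "\<dots> \<le> real (card {p \<in> S. C p})"
    using sum_mono[of "{p \<in> S. C p}" f "\<lambda>_. 1"] assms(3) by auto
  finally show ?thesis using assms(2) by linarith
qed

lemma square_sum_if_le_card:
  fixes w :: "'p \<Rightarrow> real"
  assumes "finite S" and "card {p \<in> S. C p} \<le> n"
  shows "(\<Sum>p\<in>S. if C p then w p else 0)\<^sup>2 \<le> real n * (\<Sum>p\<in>S. if C p then (w p)\<^sup>2 else 0)"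
proof -
  have "(\<Sum>p\<in>{p \<in> S. C p}. w p)\<^sup>2 \<le> (\<Sum>p\<in>{p \<in> S. C p}. (w p)\<^sup>2) * real (card {p \<in> S. C p})"
    by (rule sum_squared_le_sum_of_squares)
  also have "\<dots> \<le> (\<Sum>p\<in>{p \<in> S. C p}. (w p)\<^sup>2) * real n"
    using assms(2) by (intro mult_left_mono) (auto intro: sum_nonneg)
  finally show ?thesis
    using assms(1) by (simp add: sum.inter_filter mult.commute)
qed

section \<open>Conditional exponential moments\<close>

lemma (in finite_measure) integrable_bounded:
  fixes f :: "'a \<Rightarrow> real"
  assumes "f \<in> borel_measurable M" and "\<And>\<omega>. \<omega> \<in> space M \<Longrightarrow> \<bar>f \<omega>\<bar> \<le> B"
  shows "integrable M f"
  using assms by (intro integrable_const_bound[where B = B]) auto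

context finite_measure_subalgebra
begin

lemma real_cond_exp_linear_combination:
  assumes fin: "finite I"
    and d: "d \<in> borel_measurable F" "integrable M d"
    and c: "\<And>i. i \<in> I \<Longrightarrow> c i \<in> borel_measurable F"
    and Y: "\<And>i. i \<in> I \<Longrightarrow> Y i \<in> borel_measurable M"
    and cY: "\<And>i. i \<in> I \<Longrightarrow> integrable M (\<lambda>\<omega>. c i \<omega> * Y i \<omega>)"
  shows "AE \<omega> in M. real_cond_exp M F (\<lambda>\<omega>. d \<omega> + (\<Sum>i\<in>I. c i \<omega> * Y i \<omega>)) \<omega>
           = d \<omega> + (\<Sum>i\<in>I. c i \<omega> * real_cond_exp M F (Y i) \<omega>)"
proof -
  have "AE \<omega> in M. real_cond_exp M F (\<lambda>\<omega>. \<Sum>i\<in>I. c i \<omega> * Y i \<omega>) \<omega>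
           = (\<Sum>i\<in>I. c i \<omega> * real_cond_exp M F (Y i) \<omega>)"
    using fin c Y cY
  proof (induction I rule: finite_induct)
    case (insert j I)
    have "AE \<omega> in M. real_cond_exp M F (\<lambda>\<omega>. c j \<omega> * Y j \<omega> + (\<Sum>i\<in>I. c i \<omega> * Y i \<omega>)) \<omega>
        = real_cond_exp M F (\<lambda>\<omega>. c j \<omega> * Y j \<omega>) \<omega> + real_cond_exp M F (\<lambda>\<omega>. \<Sum>i\<in>I. c i \<omega> * Y i \<omega>) \<omega>"
      using insert.prems(3) by (intro real_cond_exp_add) auto
    moreover have "AE \<omega> in M. real_cond_exp M F (\<lambda>\<omega>. c j \<omega> * Y j \<omega>) \<omega> = c j \<omega> * real_cond_exp M F (Y j) \<omega>"
      using insert.prems by (intro real_cond_exp_mult) auto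
    moreover have "AE \<omega> in M. real_cond_exp M F (\<lambda>\<omega>. \<Sum>i\<in>I. c i \<omega> * Y i \<omega>) \<omega>
           = (\<Sum>i\<in>I. c i \<omega> * real_cond_exp M F (Y i) \<omega>)"
      using insert by auto
    ultimately have "AE \<omega> in M. real_cond_exp M F (\<lambda>\<omega>. c j \<omega> * Y j \<omega> + (\<Sum>i\<in>I. c i \<omega> * Y i \<omega>)) \<omega>
        = c j \<omega> * real_cond_exp M F (Y j) \<omega> + (\<Sum>i\<in>I. c i \<omega> * real_cond_exp M F (Y i) \<omega>)"
      by eventually_elim simp
    with insert.hyps show ?case by simp
  qed simp
  moreover have "AE \<omega> in M. real_cond_exp M F (\<lambda>\<omega>. d \<omega> + (\<Sum>i\<in>I. c i \<omega> * Y i \<omega>)) \<omega>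
     = real_cond_exp M F d \<omega> + real_cond_exp M F (\<lambda>\<omega>. \<Sum>i\<in>I. c i \<omega> * Y i \<omega>) \<omega>"
    using d cY by (intro real_cond_exp_add) auto
  moreover have "AE \<omega> in M. real_cond_exp M F d \<omega> = d \<omega>"
    using d by (intro real_cond_exp_F_meas)
  ultimately show ?thesis by eventually_elim simp
qed

lemma real_cond_exp_le_one_of_linear_majorant:
  fixes f d :: "'a \<Rightarrow> real" and c Y e :: "'i \<Rightarrow> 'a \<Rightarrow> real"
  assumes fin: "finite I"
    and f: "f \<in> borel_measurable M" "\<And>\<omega>. \<omega> \<in> space M \<Longrightarrow> 0 \<le> f \<omega>"
    and maj: "\<And>\<omega>. \<omega> \<in> space M \<Longrightarrow> f \<omega> \<le> d \<omega> + (\<Sum>i\<in>I. c i \<omega> * Y i \<omega>)"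
    and d: "d \<in> borel_measurable F" "\<And>\<omega>. \<omega> \<in> space M \<Longrightarrow> \<bar>d \<omega>\<bar> \<le> Bd"
    and c: "\<And>i. i \<in> I \<Longrightarrow> c i \<in> borel_measurable F"
      "\<And>i \<omega>. i \<in> I \<Longrightarrow> \<omega> \<in> space M \<Longrightarrow> \<bar>c i \<omega>\<bar> \<le> B"
    and Y: "\<And>i. i \<in> I \<Longrightarrow> Y i \<in> borel_measurable M"
      "\<And>i \<omega>. i \<in> I \<Longrightarrow> \<omega> \<in> space M \<Longrightarrow> \<bar>Y i \<omega>\<bar> \<le> 1"
    and ce: "\<And>i. i \<in> I \<Longrightarrow> AE \<omega> in M. real_cond_exp M F (Y i) \<omega> = e i \<omega>"
    and le1: "\<And>\<omega>. \<omega> \<in> space M \<Longrightarrow> d \<omega> + (\<Sum>i\<in>I. c i \<omega> * e i \<omega>) \<le> 1"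
  shows "AE \<omega> in M. real_cond_exp M F f \<omega> \<le> 1"
proof -
  define g where "g \<omega> = d \<omega> + (\<Sum>i\<in>I. c i \<omega> * Y i \<omega>)" for \<omega>
  have cY: "integrable M (\<lambda>\<omega>. c i \<omega> * Y i \<omega>)" if "i \<in> I" for i
  proof (rule integrable_bounded)
    show "(\<lambda>\<omega>. c i \<omega> * Y i \<omega>) \<in> borel_measurable M"
      using that c(1) Y(1) measurable_from_subalg[OF subalg] by (intro borel_measurable_times) auto
    show "\<bar>c i \<omega> * Y i \<omega>\<bar> \<le> B * 1" if "\<omega> \<in> space M" for \<omega>
      unfolding abs_mult using \<open>i \<in> I\<close> that c(2) Y(2) by (intro mult_mono) (auto intro: order_trans[OF abs_ge_zero])
  qed
  have dM: "integrable M d"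
    using d measurable_from_subalg[OF subalg] by (intro integrable_bounded) auto
  have g: "integrable M g"
    unfolding g_def using dM cY by auto
  have "integrable M f"
    by (rule Bochner_Integration.integrable_bound[OF g f(1)]) (use f(2) maj in \<open>force simp: g_def\<close>)
  then have "AE \<omega> in M. real_cond_exp M F f \<omega> \<le> real_cond_exp M F g \<omega>"
    using maj f(2) g by (intro real_cond_exp_mono AE_I2) (auto simp: g_def)
  moreover have "AE \<omega> in M. real_cond_exp M F g \<omega> = d \<omega> + (\<Sum>i\<in>I. c i \<omega> * real_cond_exp M F (Y i) \<omega>)"
    unfolding g_def using fin d dM c Y cY by (intro real_cond_exp_linear_combination) auto
  moreover have "AE \<omega> in M. \<forall>i\<in>I. real_cond_exp M F (Y i) \<omega> = e i \<omega>"
    using fin ce by (intro AE_finite_allI) auto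
  ultimately show ?thesis
    using AE_space by eventually_elim (use le1 in fastforce)
qed

text \<open>Since \<open>exp u \<le> 1 + u + u\<^sup>2\<close> on \<open>[0, 1]\<close> and \<open>Y\<^sup>2 \<le> Y\<close>, the integrand lies below a function
  affine in \<open>Y\<close>; conditioning replaces \<open>Y\<close> by \<open>e\<close>, and \<open>1 + u \<le> exp u\<close> finishes.\<close>

lemma real_cond_exp_exp_upper_deviation_le_one:
  fixes Y e :: "'a \<Rightarrow> real"
  assumes Y: "Y \<in> borel_measurable M" "\<And>\<omega>. \<omega> \<in> space M \<Longrightarrow> 0 \<le> Y \<omega> \<and> Y \<omega> \<le> 1"
    and ce: "AE \<omega> in M. real_cond_exp M F Y \<omega> = e \<omega>"
    and e: "e \<in> borel_measurable F" "\<And>\<omega>. \<omega> \<in> space M \<Longrightarrow> 0 \<le> e \<omega> \<and> e \<omega> \<le> 1"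
    and \<gamma>: "0 \<le> \<gamma>" "\<gamma> \<le> 1"
  shows "AE \<omega> in M. real_cond_exp M F (\<lambda>\<omega>. exp (\<gamma> * Y \<omega> - (\<gamma> + \<gamma>\<^sup>2) * e \<omega>)) \<omega> \<le> 1"
proof (rule real_cond_exp_le_one_of_linear_majorant[where I = "{()}" and e = "\<lambda>_. e"
      and d = "\<lambda>\<omega>. exp (- (\<gamma> + \<gamma>\<^sup>2) * e \<omega>)" and c = "\<lambda>_ \<omega>. exp (- (\<gamma> + \<gamma>\<^sup>2) * e \<omega>) * (\<gamma> + \<gamma>\<^sup>2)"
      and Y = "\<lambda>_. Y" and Bd = 1 and B = 2])
  define b where "b = \<gamma> + \<gamma>\<^sup>2"
  have b: "0 \<le> b" "b \<le> 2"
    using \<gamma> power_le_one[of \<gamma> 2] unfolding b_def by auto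
  have exp_le: "exp (- b * e \<omega>) \<le> 1" if "\<omega> \<in> space M" for \<omega>
    using e(2)[OF that] b by simp
  show "exp (\<gamma> * Y \<omega> - b * e \<omega>)
      \<le> exp (- b * e \<omega>) + (\<Sum>i\<in>{()}. exp (- b * e \<omega>) * b * Y \<omega>)" if "\<omega> \<in> space M" for \<omega>
  proof -
    have y: "0 \<le> Y \<omega>" "Y \<omega> \<le> 1" using Y(2)[OF that] by auto
    have "exp (\<gamma> * Y \<omega>) \<le> 1 + \<gamma> * Y \<omega> + (\<gamma> * Y \<omega>)\<^sup>2"
      using \<gamma> y by (intro exp_bound) (auto simp: mult_le_one)
    also have "(\<gamma> * Y \<omega>)\<^sup>2 = \<gamma>\<^sup>2 * (Y \<omega> * Y \<omega>)"
      by (simp add: power2_eq_square)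
    also have "\<dots> \<le> \<gamma>\<^sup>2 * Y \<omega>"
      using y by (intro mult_left_mono) (auto simp: mult_left_le)
    finally have "exp (\<gamma> * Y \<omega>) \<le> 1 + b * Y \<omega>"
      unfolding b_def by (simp add: algebra_simps)
    then have "exp (- b * e \<omega>) * exp (\<gamma> * Y \<omega>) \<le> exp (- b * e \<omega>) * (1 + b * Y \<omega>)"
      by simp
    then show ?thesis by (simp add: exp_diff exp_minus algebra_simps divide_simps)
  qed
  show "exp (- b * e \<omega>) + (\<Sum>i\<in>{()}. exp (- b * e \<omega>) * b * e \<omega>) \<le> 1" for \<omega>
  proof -
    have "exp (- b * e \<omega>) * (1 + b * e \<omega>) \<le> exp (- b * e \<omega>) * exp (b * e \<omega>)"
      by (intro mult_left_mono) (auto simp: add.commute)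
    then show ?thesis by (simp add: algebra_simps exp_minus_inverse)
  qed
  show "\<bar>exp (- b * e \<omega>) * b\<bar> \<le> 2" if "\<omega> \<in> space M" for \<omega>
    using mult_mono[OF exp_le[OF that] b(2)] b by simp
  show "\<bar>exp (- b * e \<omega>)\<bar> \<le> 1" if "\<omega> \<in> space M" for \<omega>
    using exp_le[OF that] by simp
  show "(\<lambda>\<omega>. exp (\<gamma> * Y \<omega> - b * e \<omega>)) \<in> borel_measurable M"
    using Y(1) measurable_from_subalg[OF subalg e(1)] by measurable
qed (use Y ce e in auto)

text \<open>A Freedman-type bound: \<open>exp (- u) \<le> 1 - u + u\<^sup>2 / 2\<close> for \<open>u \<ge> 0\<close> together with \<open>square\<close>
  puts the integrand below a function affine in the \<open>Y i\<close>, whose conditional expectation is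
  controlled by \<open>variance\<close>.\<close>

lemma real_cond_exp_exp_lower_deviation_le_one:
  fixes Y e w v :: "'i \<Rightarrow> 'a \<Rightarrow> real"
  assumes fin: "finite I"
    and Y: "\<And>i. i \<in> I \<Longrightarrow> Y i \<in> borel_measurable M"
      "\<And>i \<omega>. i \<in> I \<Longrightarrow> \<omega> \<in> space M \<Longrightarrow> 0 \<le> Y i \<omega> \<and> Y i \<omega> \<le> 1"
    and ce: "\<And>i. i \<in> I \<Longrightarrow> AE \<omega> in M. real_cond_exp M F (Y i) \<omega> = e i \<omega>"
    and e: "\<And>i. i \<in> I \<Longrightarrow> e i \<in> borel_measurable F"
      "\<And>i \<omega>. i \<in> I \<Longrightarrow> \<omega> \<in> space M \<Longrightarrow> 0 \<le> e i \<omega> \<and> e i \<omega> \<le> 1"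
    and w: "\<And>i. i \<in> I \<Longrightarrow> w i \<in> borel_measurable F"
      "\<And>i \<omega>. i \<in> I \<Longrightarrow> \<omega> \<in> space M \<Longrightarrow> 0 \<le> w i \<omega> \<and> w i \<omega> \<le> Bw"
    and v: "\<And>i. i \<in> I \<Longrightarrow> v i \<in> borel_measurable F"
      "\<And>i \<omega>. i \<in> I \<Longrightarrow> \<omega> \<in> space M \<Longrightarrow> 0 \<le> v i \<omega> \<and> v i \<omega> \<le> Bw"
    and square: "\<And>\<omega>. \<omega> \<in> space M \<Longrightarrow> (\<Sum>i\<in>I. w i \<omega> * Y i \<omega>)\<^sup>2 \<le> h * (\<Sum>i\<in>I. v i \<omega> * Y i \<omega>)"
    and variance: "\<And>\<omega>. \<omega> \<in> space M \<Longrightarrow> (\<Sum>i\<in>I. v i \<omega> * e i \<omega>) \<le> K"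
    and nonneg: "0 \<le> \<eta>" "0 \<le> h"
  shows "AE \<omega> in M. real_cond_exp M F (\<lambda>\<omega>. exp (\<eta> * (\<Sum>i\<in>I. w i \<omega> * e i \<omega>)
            - \<eta> * (\<Sum>i\<in>I. w i \<omega> * Y i \<omega>) - \<eta>\<^sup>2 * h / 2 * K)) \<omega> \<le> 1"
proof -
  define q where "q = \<eta>\<^sup>2 * h / 2"
  have q: "0 \<le> q" unfolding q_def using nonneg by simp
  define \<alpha> where "\<alpha> \<omega> = \<eta> * (\<Sum>i\<in>I. w i \<omega> * e i \<omega>) - q * K" for \<omega>
  define A where "A = \<eta> * (real (card I) * Bw) + \<bar>q * K\<bar>"
  have \<alpha>_le: "\<alpha> \<omega> \<le> A" if "\<omega> \<in> space M" for \<omega>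
  proof -
    have "(\<Sum>i\<in>I. w i \<omega> * e i \<omega>) \<le> (\<Sum>i\<in>I. Bw)"
      using w(2) e(2) that by (intro sum_mono order_trans[OF mult_right_le_one_le]) auto
    then have "\<eta> * (\<Sum>i\<in>I. w i \<omega> * e i \<omega>) \<le> \<eta> * (real (card I) * Bw)"
      using nonneg by (intro mult_left_mono) auto
    then show ?thesis
      unfolding \<alpha>_def A_def using abs_ge_minus_self[of "q * K"] by linarith
  qed
  have \<alpha>_meas: "\<alpha> \<in> borel_measurable F"
    unfolding \<alpha>_def using w(1) e(1) by measurable
  show ?thesis
  proof (rule real_cond_exp_le_one_of_linear_majorant[OF fin, where Y = Y and e = e
        and d = "\<lambda>\<omega>. exp (\<alpha> \<omega>)" and c = "\<lambda>i \<omega>. exp (\<alpha> \<omega>) * (- \<eta> * w i \<omega> + q * v i \<omega>)"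
        and Bd = "exp A" and B = "exp A * (\<eta> * Bw + q * Bw)"])
    fix \<omega> assume \<omega>: "\<omega> \<in> space M"
    define W where "W = (\<Sum>i\<in>I. w i \<omega> * Y i \<omega>)"
    define V where "V = (\<Sum>i\<in>I. v i \<omega> * Y i \<omega>)"
    have "0 \<le> W"
      unfolding W_def using w(2) Y(2) \<omega> by (intro sum_nonneg) simp
    then have "exp (\<alpha> \<omega> - \<eta> * W) \<le> exp (\<alpha> \<omega>) * (1 - \<eta> * W + q * V)"
      using exp_diff_le_affine[OF nonneg(1) _ square[OF \<omega>]] unfolding W_def V_def q_def by blast
    moreover have "\<alpha> \<omega> - \<eta> * W = \<eta> * (\<Sum>i\<in>I. w i \<omega> * e i \<omega>) - \<eta> * W - \<eta>\<^sup>2 * h / 2 * K"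
      unfolding \<alpha>_def q_def by simp
    moreover have "exp (\<alpha> \<omega>) * (1 - \<eta> * W + q * V)
        = exp (\<alpha> \<omega>) + (\<Sum>i\<in>I. exp (\<alpha> \<omega>) * (- \<eta> * w i \<omega> + q * v i \<omega>) * Y i \<omega>)"
      unfolding W_def V_def by (simp add: algebra_simps sum_distrib_left sum.distrib sum_subtractf sum_negf)
    ultimately show "exp (\<eta> * (\<Sum>i\<in>I. w i \<omega> * e i \<omega>) - \<eta> * W - \<eta>\<^sup>2 * h / 2 * K)
        \<le> exp (\<alpha> \<omega>) + (\<Sum>i\<in>I. exp (\<alpha> \<omega>) * (- \<eta> * w i \<omega> + q * v i \<omega>) * Y i \<omega>)"
      by simp
    have "exp (\<alpha> \<omega>) + (\<Sum>i\<in>I. exp (\<alpha> \<omega>) * (- \<eta> * w i \<omega> + q * v i \<omega>) * e i \<omega>)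
        = exp (\<alpha> \<omega>) * (1 - \<eta> * (\<Sum>i\<in>I. w i \<omega> * e i \<omega>) + q * (\<Sum>i\<in>I. v i \<omega> * e i \<omega>))"
      by (simp add: algebra_simps sum_distrib_left sum.distrib sum_subtractf sum_negf)
    also have "\<dots> \<le> 1"
      using exp_mult_affine_le_one[OF q variance[OF \<omega>]] unfolding \<alpha>_def .
    finally show "exp (\<alpha> \<omega>) + (\<Sum>i\<in>I. exp (\<alpha> \<omega>) * (- \<eta> * w i \<omega> + q * v i \<omega>) * e i \<omega>) \<le> 1" .
    show "\<bar>exp (\<alpha> \<omega>)\<bar> \<le> exp A"
      using \<alpha>_le[OF \<omega>] by simp
    show "\<bar>exp (\<alpha> \<omega>) * (- \<eta> * w i \<omega> + q * v i \<omega>)\<bar> \<le> exp A * (\<eta> * Bw + q * Bw)" if "i \<in> I" for i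
    proof -
      have "\<bar>- \<eta> * w i \<omega> + q * v i \<omega>\<bar> \<le> \<eta> * Bw + q * Bw"
        using w(2)[OF that \<omega>] v(2)[OF that \<omega>] nonneg q
        by (intro order_trans[OF abs_triangle_ineq] add_mono) (auto simp: abs_mult intro: mult_left_mono)
      then show ?thesis
        using \<alpha>_le[OF \<omega>] by (simp add: abs_mult mult_mono)
    qed
  next
    have "w i \<in> borel_measurable M" "e i \<in> borel_measurable M" if "i \<in> I" for i
      using w(1) e(1) that measurable_from_subalg[OF subalg] by blast+
    then show "(\<lambda>\<omega>. exp (\<eta> * (\<Sum>i\<in>I. w i \<omega> * e i \<omega>) - \<eta> * (\<Sum>i\<in>I. w i \<omega> * Y i \<omega>) - \<eta>\<^sup>2 * h / 2 * K))
        \<in> borel_measurable M"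
      using Y(1) by (intro measurable_compose[OF _ borel_measurable_exp] borel_measurable_diff
          borel_measurable_times borel_measurable_sum borel_measurable_const) auto
  qed (use \<alpha>_meas w(1) v(1) Y ce in auto)
qed

lemma integral_mult_le_of_real_cond_exp_le_one:
  fixes g e :: "'a \<Rightarrow> real"
  assumes g: "g \<in> borel_measurable F" "integrable M g" "\<And>\<omega>. \<omega> \<in> space M \<Longrightarrow> 0 \<le> g \<omega>"
    and e: "e \<in> borel_measurable M" and ge: "integrable M (\<lambda>\<omega>. g \<omega> * e \<omega>)"
    and ce: "AE \<omega> in M. real_cond_exp M F e \<omega> \<le> 1"
  shows "(\<integral>\<omega>. g \<omega> * e \<omega> \<partial>M) \<le> (\<integral>\<omega>. g \<omega> \<partial>M)"
proof -
  have "(\<integral>\<omega>. g \<omega> * e \<omega> \<partial>M) = (\<integral>\<omega>. g \<omega> * real_cond_exp M F e \<omega> \<partial>M)"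
    by (rule real_cond_exp_intg(2)[OF ge g(1) e, symmetric])
  also have "\<dots> \<le> (\<integral>\<omega>. g \<omega> \<partial>M)"
  proof (intro integral_mono_AE real_cond_exp_intg(1)[OF ge g(1) e] g(2))
    show "AE \<omega> in M. g \<omega> * real_cond_exp M F e \<omega> \<le> g \<omega>"
      using ce AE_space by eventually_elim (use g(3) in \<open>auto simp: mult_left_le\<close>)
  qed
  finally show ?thesis .
qed

end

lemma (in prob_space) exp_partial_sum_integral_le_one:
  fixes Z :: "nat \<Rightarrow> 'a \<Rightarrow> real"
  assumes sub: "\<And>t. t \<le> T \<Longrightarrow> subalgebra M (F t)"
    and mono: "\<And>s t. s \<le> t \<Longrightarrow> t \<le> T \<Longrightarrow> sets (F s) \<subseteq> sets (F t)"
    and adapted: "\<And>t. t \<in> {1..T} \<Longrightarrow> Z t \<in> borel_measurable (F t)"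
    and bounded: "\<And>t \<omega>. t \<in> {1..T} \<Longrightarrow> \<omega> \<in> space M \<Longrightarrow> Z t \<omega> \<le> C"
    and ce: "\<And>t. t \<in> {1..T} \<Longrightarrow> AE \<omega> in M. real_cond_exp M (F (t - 1)) (\<lambda>\<omega>. exp (Z t \<omega>)) \<omega> \<le> 1"
    and n: "n \<le> T"
  shows "(\<lambda>\<omega>. exp (\<Sum>t\<in>{1..n}. Z t \<omega>)) \<in> borel_measurable (F n) \<and>
    integrable M (\<lambda>\<omega>. exp (\<Sum>t\<in>{1..n}. Z t \<omega>)) \<and> (\<integral>\<omega>. exp (\<Sum>t\<in>{1..n}. Z t \<omega>) \<partial>M) \<le> 1"
  using n
proof (induction n)
  case 0
  then show ?case by (simp add: prob_space)
next
  case (Suc n)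
  define E where "E \<omega> = exp (\<Sum>t\<in>{1..n}. Z t \<omega>)" for \<omega>
  interpret Fn: finite_measure_subalgebra M "F n"
    using Suc.prems sub by unfold_locales auto
  have t: "Suc n \<in> {1..T}" and subS: "subalgebra M (F (Suc n))"
    using Suc.prems sub by auto
  have "subalgebra (F (Suc n)) (F n)"
    using Fn.subalg subS mono[of n "Suc n"] Suc.prems unfolding subalgebra_def by auto
  then have E: "E \<in> borel_measurable (F (Suc n))" "E \<in> borel_measurable (F n)" "integrable M E"
      "(\<integral>\<omega>. E \<omega> \<partial>M) \<le> 1"
    using Suc measurable_from_subalg unfolding E_def by auto
  have e: "(\<lambda>\<omega>. exp (Z (Suc n) \<omega>)) \<in> borel_measurable (F (Suc n))"
    using adapted[OF t] by measurable
  have prod: "(\<lambda>\<omega>. exp (\<Sum>t\<in>{1..Suc n}. Z t \<omega>)) = (\<lambda>\<omega>. E \<omega> * exp (Z (Suc n) \<omega>))"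
    by (simp add: E_def exp_add fun_eq_iff)
  have meas: "(\<lambda>\<omega>. E \<omega> * exp (Z (Suc n) \<omega>)) \<in> borel_measurable (F (Suc n))"
    using E(1) e by measurable
  have "(\<Sum>t\<in>{1..Suc n}. Z t \<omega>) \<le> (\<Sum>t\<in>{1..Suc n}. C)" if "\<omega> \<in> space M" for \<omega>
    using that t by (intro sum_mono bounded) auto
  then have int: "integrable M (\<lambda>\<omega>. E \<omega> * exp (Z (Suc n) \<omega>))"
    unfolding prod[symmetric] using measurable_from_subalg[OF subS meas, folded prod]
    by (intro integrable_const_bound[where B = "exp (real (Suc n) * C)"] AE_I2) auto
  have "(\<integral>\<omega>. E \<omega> * exp (Z (Suc n) \<omega>) \<partial>M) \<le> (\<integral>\<omega>. E \<omega> \<partial>M)"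
    using ce[OF t] measurable_from_subalg[OF subS e]
    by (intro Fn.integral_mult_le_of_real_cond_exp_le_one[OF E(2,3) _ _ int]) (auto simp: E_def)
  with meas int E(4) show ?case
    unfolding prod by simp
qed

lemma (in prob_space) exp_sum_adapted_tail_bound:
  fixes Z :: "nat \<Rightarrow> 'a \<Rightarrow> real"
  assumes sub: "\<And>t. t \<le> T \<Longrightarrow> subalgebra M (F t)"
    and mono: "\<And>s t. s \<le> t \<Longrightarrow> t \<le> T \<Longrightarrow> sets (F s) \<subseteq> sets (F t)"
    and adapted: "\<And>t. t \<in> {1..T} \<Longrightarrow> Z t \<in> borel_measurable (F t)"
    and bounded: "\<And>t \<omega>. t \<in> {1..T} \<Longrightarrow> \<omega> \<in> space M \<Longrightarrow> Z t \<omega> \<le> C"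
    and ce: "\<And>t. t \<in> {1..T} \<Longrightarrow> AE \<omega> in M. real_cond_exp M (F (t - 1)) (\<lambda>\<omega>. exp (Z t \<omega>)) \<omega> \<le> 1"
  shows "measure M {\<omega> \<in> space M. \<iota> \<le> (\<Sum>t\<in>{1..T}. Z t \<omega>)} \<le> exp (- \<iota>)"
proof -
  have int: "integrable M (\<lambda>\<omega>. exp (\<Sum>t\<in>{1..T}. Z t \<omega>))"
    and le1: "(\<integral>\<omega>. exp (\<Sum>t\<in>{1..T}. Z t \<omega>) \<partial>M) \<le> 1"
    using exp_partial_sum_integral_le_one[where Z = Z and F = F and C = C, OF assms order_refl] by auto
  have "{\<omega> \<in> space M. \<iota> \<le> (\<Sum>t\<in>{1..T}. Z t \<omega>)} = {\<omega> \<in> space M. exp \<iota> \<le> exp (\<Sum>t\<in>{1..T}. Z t \<omega>)}"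
    by auto
  also have "measure M \<dots> \<le> (\<integral>\<omega>. exp (\<Sum>t\<in>{1..T}. Z t \<omega>) \<partial>M) / exp \<iota>"
    by (rule integral_Markov_inequality_measure[OF int]) auto
  also have "\<dots> \<le> exp (- \<iota>)"
    using le1 by (simp add: exp_minus divide_right_mono field_simps)
  finally show ?thesis .
qed

section \<open>Realization plans and pure policies\<close>

lemma game_structD:
  assumes "game_struct X Act dep H hist"
  shows "finite X" and "\<And>x. x \<in> X \<Longrightarrow> finite (Act x)" and "\<And>x. x \<in> X \<Longrightarrow> Act x \<noteq> {}"
    and "\<And>x. x \<in> X \<Longrightarrow> dep x \<in> {1..H}" and "1 \<le> H"
  using assms unfolding game_struct_def by auto

lemma real_plan_eq_prod_path:
  "real_plan hist mu x a = prod_list (map (\<lambda>(y, b). mu y b) (hist x @ [(x, a)]))"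
  by (simp add: real_plan_def)

text \<open>Perfect recall makes the depths along the path to \<open>(x, a)\<close> exactly \<open>1, \<dots>, dep x\<close>,
  so each information set occurs on it at most once.\<close>

lemma history_path:
  assumes g: "game_struct X Act dep H hist" and x: "x \<in> X" and a: "a \<in> Act x"
  shows "distinct (map fst (hist x @ [(x, a)]))"
    and "\<forall>p\<in>set (hist x @ [(x, a)]). fst p \<in> X \<and> snd p \<in> Act (fst p)"
proof -
  have len: "length (hist x) = dep x - 1" and d1: "1 \<le> dep x"
    and ent: "\<And>i. i < length (hist x) \<Longrightarrow> fst (hist x ! i) \<in> X \<and> dep (fst (hist x ! i)) = i + 1 \<and>
            snd (hist x ! i) \<in> Act (fst (hist x ! i))"
    using g x unfolding game_struct_def by auto
  have "map dep (map fst (hist x @ [(x, a)])) = [1..<dep x + 1]"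
  proof (rule nth_equalityI)
    fix i assume "i < length (map dep (map fst (hist x @ [(x, a)])))"
    then show "map dep (map fst (hist x @ [(x, a)])) ! i = [1..<dep x + 1] ! i"
      using ent len d1 by (cases "i < length (hist x)") (auto simp: nth_append)
  qed (use len d1 in simp)
  then show "distinct (map fst (hist x @ [(x, a)]))"
    by (metis distinct_map distinct_upt)
  show "\<forall>p\<in>set (hist x @ [(x, a)]). fst p \<in> X \<and> snd p \<in> Act (fst p)"
    using ent x a by (auto simp: in_set_conv_nth) (metis fst_conv snd_conv)+
qed

lemma prod_list_fun_upd_notin:
  assumes "x \<notin> fst ` set P"
  shows "prod_list (map (\<lambda>(z, b). (mu(x := r)) z b) P) = prod_list (map (\<lambda>(z, b). mu z b) P)"
  using assms by (induction P) auto

lemma prod_list_fun_upd_affine: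
  fixes mu :: "'x \<Rightarrow> 'a \<Rightarrow> real"
  assumes "distinct (map fst P)" and "\<forall>p\<in>set P. fst p = x \<longrightarrow> snd p \<in> A"
    and "finite A" and "sum r A = 1"
  shows "prod_list (map (\<lambda>(z, b). (mu(x := r)) z b) P)
       = (\<Sum>b0\<in>A. r b0 * prod_list (map (\<lambda>(z, b). (mu(x := (\<lambda>b. of_bool (b = b0)))) z b) P))"
  using assms(1,2)
proof (induction P)
  case Nil
  then show ?case using assms(4) by simp
next
  case (Cons p P)
  obtain z b where p: "p = (z, b)" by (cases p)
  show ?case
  proof (cases "z = x")
    case True
    have x: "x \<notin> fst ` set P" and b: "b \<in> A"
      using Cons.prems p True by auto
    show ?thesis
      using b assms(3)
      by (simp only: p True list.map prod_list.Cons prod_list_fun_upd_notin[OF x] prod.case)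
        (simp add: mult.commute[of _ "prod_list _"] mult.left_commute[of _ "prod_list _"]
          sum_distrib_left[symmetric])
  next
    case False
    with Cons show ?thesis by (simp add: p sum_distrib_left mult.left_commute)
  qed
qed

lemma real_plan_eq_prod:
  assumes "game_struct X Act dep H hist" and "x \<in> X" and "a \<in> Act x"
  shows "real_plan hist mu x a = (\<Prod>p\<in>set (hist x @ [(x, a)]). mu (fst p) (snd p))"
proof -
  have "distinct (hist x @ [(x, a)])"
    using history_path(1)[OF assms] distinct_map by blast
  then show ?thesis
    by (simp add: real_plan_eq_prod_path prod.distinct_set_conv_list split_beta')
qed

lemma policy_nonneg_le_one:
  assumes "mu \<in> policies X Act" and "x \<in> X" and "a \<in> Act x" and "finite (Act x)"
  shows "0 \<le> mu x a" and "mu x a \<le> 1"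
proof -
  have nonneg: "\<forall>b\<in>Act x. 0 \<le> mu x b" and sum: "(\<Sum>b\<in>Act x. mu x b) = 1"
    using assms unfolding policies_def by auto
  show "0 \<le> mu x a"
    using nonneg assms by auto
  show "mu x a \<le> 1"
    using member_le_sum[of a "Act x" "mu x"] nonneg sum assms by auto
qed

lemma real_plan_nonneg_le_one:
  assumes g: "game_struct X Act dep H hist" and mu: "mu \<in> policies X Act"
    and x: "x \<in> X" and a: "a \<in> Act x"
  shows "0 \<le> real_plan hist mu x a" and "real_plan hist mu x a \<le> 1"
  using history_path(2)[OF g x a] policy_nonneg_le_one[OF mu] game_structD(2)[OF g]
  unfolding real_plan_eq_prod[OF g x a] by (auto intro!: prod_nonneg prod_le_1)

lemma real_plan_pos:
  assumes g: "game_struct X Act dep H hist" and mu: "positive_policy X Act mu"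
    and x: "x \<in> X" and a: "a \<in> Act x"
  shows "0 < real_plan hist mu x a"
  using history_path(2)[OF g x a] mu unfolding real_plan_eq_prod[OF g x a] positive_policy_def
  by (auto intro!: prod_pos)

lemma real_plan_cong:
  assumes g: "game_struct X Act dep H hist" and x: "x \<in> X" and a: "a \<in> Act x"
    and eq: "\<And>y. y \<in> X \<Longrightarrow> mu y = mu' y"
  shows "real_plan hist mu x a = real_plan hist mu' x a"
  using history_path(2)[OF g x a] eq unfolding real_plan_eq_prod[OF g x a]
  by (intro prod.cong) auto

lemma borel_measurable_real_plan:
  assumes g: "game_struct X Act dep H hist" and x: "x \<in> X" and a: "a \<in> Act x"
    and m: "\<And>y b. y \<in> X \<Longrightarrow> b \<in> Act y \<Longrightarrow> (\<lambda>\<omega>. m \<omega> y b) \<in> borel_measurable N"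
  shows "(\<lambda>\<omega>. real_plan hist (m \<omega>) x a) \<in> borel_measurable N"
  using history_path(2)[OF g x a] m unfolding real_plan_eq_prod[OF g x a]
  by (intro borel_measurable_prod) auto

lemma ip_real_plan_fun_upd_affine:
  assumes g: "game_struct X Act dep H hist" and x: "x \<in> X" and r: "sum r (Act x) = 1"
  shows "ip X Act c (real_plan hist (mu(x := r)))
       = (\<Sum>b0\<in>Act x. r b0 * ip X Act c (real_plan hist (mu(x := (\<lambda>b. of_bool (b = b0))))))"
proof -
  have "real_plan hist (mu(x := r)) y a
      = (\<Sum>b0\<in>Act x. r b0 * real_plan hist (mu(x := (\<lambda>b. of_bool (b = b0)))) y a)"
    if "y \<in> X" "a \<in> Act y" for y a
    using history_path[OF g that] game_structD(2)[OF g x] r unfolding real_plan_eq_prod_path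
    by (intro prod_list_fun_upd_affine) auto
  then have "ip X Act c (real_plan hist (mu(x := r))) = (\<Sum>y\<in>X. \<Sum>a\<in>Act y.
      c y a * (\<Sum>b0\<in>Act x. r b0 * real_plan hist (mu(x := (\<lambda>b. of_bool (b = b0)))) y a))"
    unfolding ip_def by simp
  also have "\<dots> = (\<Sum>b0\<in>Act x. r b0 * ip X Act c (real_plan hist (mu(x := (\<lambda>b. of_bool (b = b0))))))"
    unfolding ip_def sum_distrib_left
    by (subst sum.swap) (simp add: sum_distrib_left algebra_simps sum.swap[of _ "Act x"])
  finally show ?thesis .
qed

lemma exists_le_convex_combination:
  fixes v w :: "'b \<Rightarrow> real"
  assumes "finite A" and "A \<noteq> {}" and "\<forall>b\<in>A. 0 \<le> w b" and "sum w A = 1"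
  shows "\<exists>b\<in>A. v b \<le> (\<Sum>b\<in>A. w b * v b)"
proof -
  have "Min (v ` A) \<in> v ` A"
    using assms(1,2) by (intro Min_in) auto
  then obtain b where "b \<in> A" and "v b = Min (v ` A)"
    by auto
  with assms(1) have b: "b \<in> A" "\<forall>b'\<in>A. v b \<le> v b'"
    by auto
  have "v b = (\<Sum>b'\<in>A. w b' * v b)"
    using assms(4) by (simp add: sum_distrib_right[symmetric])
  also have "\<dots> \<le> (\<Sum>b'\<in>A. w b' * v b')"
    using b assms(3) by (intro sum_mono mult_left_mono) auto
  finally show ?thesis using b by blast
qed

definition pure_policy :: "('x \<Rightarrow> 'a) \<Rightarrow> 'x \<Rightarrow> 'a \<Rightarrow> real" where
  "pure_policy s x a = of_bool (a = s x)"

lemma pure_policy_in_policies: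
  assumes "game_struct X Act dep H hist" and "s \<in> PiE X Act"
  shows "pure_policy s \<in> policies X Act"
  using assms game_structD(2)[OF assms(1)] unfolding policies_def pure_policy_def
  by (auto simp: of_bool_def)

text \<open>A linear functional of the realization plan is minimised at a vertex: the policy is made
  pure one information set at a time, each time moving to the best action at that set.\<close>

lemma exists_policy_pure_on_le:
  assumes g: "game_struct X Act dep H hist" and mu: "mu \<in> policies X Act" and Y: "Y \<subseteq> X"
  shows "\<exists>mu'\<in>policies X Act. ip X Act c (real_plan hist mu') \<le> ip X Act c (real_plan hist mu) \<and>
      (\<forall>x\<in>Y. \<exists>b\<in>Act x. mu' x = (\<lambda>a. of_bool (a = b)))"
  using finite_subset[OF Y game_structD(1)[OF g]] Y
proof (induction Y rule: finite_induct)
  case empty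
  then show ?case using mu by auto
next
  case (insert x Y)
  then obtain mu' where mu': "mu' \<in> policies X Act"
      "ip X Act c (real_plan hist mu') \<le> ip X Act c (real_plan hist mu)"
      "\<forall>y\<in>Y. \<exists>b\<in>Act y. mu' y = (\<lambda>a. of_bool (a = b))"
    by auto
  have x: "x \<in> X" using insert by auto
  have r: "sum (mu' x) (Act x) = 1" "\<forall>b\<in>Act x. 0 \<le> mu' x b"
    using mu' x unfolding policies_def by auto
  have "ip X Act c (real_plan hist mu')
      = (\<Sum>b0\<in>Act x. mu' x b0 * ip X Act c (real_plan hist (mu'(x := (\<lambda>b. of_bool (b = b0))))))"
    using ip_real_plan_fun_upd_affine[OF g x r(1), of c mu'] by simp
  then obtain b where b: "b \<in> Act x"
    "ip X Act c (real_plan hist (mu'(x := (\<lambda>a. of_bool (a = b))))) \<le> ip X Act c (real_plan hist mu')"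
    using exists_le_convex_combination[of "Act x" "mu' x"] game_structD(2,3)[OF g x] r by force
  let ?mu = "mu'(x := (\<lambda>a. of_bool (a = b)))"
  show ?case
  proof (rule bexI[of _ ?mu])
    show "?mu \<in> policies X Act"
      using mu'(1) b(1) game_structD(2)[OF g x] unfolding policies_def by auto
    have "\<forall>y\<in>insert x Y. \<exists>b\<in>Act y. ?mu y = (\<lambda>a. of_bool (a = b))"
      using mu'(3) b(1) insert.hyps(2) by auto
    then show "ip X Act c (real_plan hist ?mu) \<le> ip X Act c (real_plan hist mu) \<and>
        (\<forall>y\<in>insert x Y. \<exists>b\<in>Act y. ?mu y = (\<lambda>a. of_bool (a = b)))"
      using b(2) mu'(2) by linarith
  qed
qed

lemma exists_pure_policy_le:
  assumes g: "game_struct X Act dep H hist" and mu: "mu \<in> policies X Act"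
  shows "\<exists>s\<in>PiE X Act. ip X Act c (real_plan hist (pure_policy s)) \<le> ip X Act c (real_plan hist mu)"
proof -
  obtain mu' where mu': "ip X Act c (real_plan hist mu') \<le> ip X Act c (real_plan hist mu)"
      "\<forall>x\<in>X. \<exists>b\<in>Act x. mu' x = (\<lambda>a. of_bool (a = b))"
    using exists_policy_pure_on_le[OF g mu order_refl] by blast
  then obtain s where s: "\<And>x. x \<in> X \<Longrightarrow> s x \<in> Act x \<and> mu' x = (\<lambda>a. of_bool (a = s x))"
    using bchoice[of X "\<lambda>x b. b \<in> Act x \<and> mu' x = (\<lambda>a. of_bool (a = b))"] by blast
  have "ip X Act c (real_plan hist (pure_policy (restrict s X))) = ip X Act c (real_plan hist mu')"
    unfolding ip_def using s
    by (intro sum.cong refl arg_cong2[where f = "(*)"] real_plan_cong[OF g]) (auto simp: pure_policy_def)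
  with mu' s show ?thesis
    by (intro bexI[of _ "restrict s X"]) auto
qed

lemma sum_ip_diff_real_plan:
  "(\<Sum>t\<in>I. ip X Act (l t) (\<lambda>x a. P t x a - real_plan hist d x a))
     = (\<Sum>t\<in>I. ip X Act (l t) (P t)) - ip X Act (\<lambda>x a. \<Sum>t\<in>I. l t x a) (real_plan hist d)"
  unfolding ip_def by (simp add: right_diff_distrib sum_subtractf sum_distrib_right sum.swap[of _ I])

lemma regret_eq_Max_pure:
  assumes g: "game_struct X Act dep H hist"
  shows "regret X Act hist T l m = Max ((\<lambda>s. \<Sum>t\<in>{1..T}. ip X Act (l t)
            (\<lambda>x a. real_plan hist (m t) x a - real_plan hist (pure_policy s) x a)) ` PiE X Act)"
    and "d \<in> policies X Act \<Longrightarrow> (\<Sum>t\<in>{1..T}. ip X Act (l t)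
            (\<lambda>x a. real_plan hist (m t) x a - real_plan hist d x a)) \<le> regret X Act hist T l m"
proof -
  define G where "G d = (\<Sum>t\<in>{1..T}. ip X Act (l t) (\<lambda>x a. real_plan hist (m t) x a - real_plan hist d x a))"
    for d
  define V where "V = Max (G ` pure_policy ` PiE X Act)"
  have fin: "finite (PiE X Act)" and ne: "PiE X Act \<noteq> {}"
    using game_structD[OF g] by (auto intro: finite_PiE simp: PiE_eq_empty_iff)
  have le: "G d \<le> V" if d: "d \<in> policies X Act" for d
  proof -
    obtain s where s: "s \<in> PiE X Act" and
      "ip X Act (\<lambda>x a. \<Sum>t\<in>{1..T}. l t x a) (real_plan hist (pure_policy s))
         \<le> ip X Act (\<lambda>x a. \<Sum>t\<in>{1..T}. l t x a) (real_plan hist d)"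
      using exists_pure_policy_le[OF g d] by blast
    then have "G d \<le> G (pure_policy s)"
      unfolding G_def sum_ip_diff_real_plan by linarith
    also have "\<dots> \<le> V"
      unfolding V_def using fin s by (intro Max_ge) auto
    finally show ?thesis .
  qed
  have "V \<in> G ` pure_policy ` PiE X Act"
    unfolding V_def using fin ne by (intro Max_in) auto
  then obtain s where s: "s \<in> PiE X Act" and V: "V = G (pure_policy s)"
    by auto
  have "bdd_above (G ` policies X Act)"
    using le by (intro bdd_aboveI2) auto
  then have "regret X Act hist T l m = V"
    unfolding regret_def G_def[symmetric] V using le pure_policy_in_policies[OF g s]
    by (intro antisym cSUP_least cSUP_upper) (auto simp: V)
  then show "regret X Act hist T l m = Max ((\<lambda>s. G (pure_policy s)) ` PiE X Act)"
    and "d \<in> policies X Act \<Longrightarrow> G d \<le> regret X Act hist T l m"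
    using le unfolding V_def image_image by auto
qed

section \<open>The regret bound on the good event\<close>

lemma ip_sum_left:
  "ip X Act (\<lambda>x a. \<Sum>t\<in>I. f t x a) g = (\<Sum>t\<in>I. ip X Act (f t) g)"
  unfolding ip_def sum_distrib_right by (subst sum.swap) (simp add: sum.swap[of _ I])

lemma ip_diff_left:
  "ip X Act (\<lambda>x a. f x a - f' x a) g = ip X Act f g - ip X Act f' g"
  unfolding ip_def by (simp add: left_diff_distrib sum_subtractf)

lemma ip_nonneg:
  assumes "\<And>x a. x \<in> X \<Longrightarrow> a \<in> Act x \<Longrightarrow> 0 \<le> f x a" "\<And>x a. x \<in> X \<Longrightarrow> a \<in> Act x \<Longrightarrow> 0 \<le> g x a"
  shows "0 \<le> ip X Act f g"
  unfolding ip_def using assms by (intro sum_nonneg) auto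

lemma ip_diff_real_plan_le:
  assumes g: "game_struct X Act dep H hist" and mus: "positive_policy X Act mus"
    and d: "d \<in> policies X Act" and \<gamma>: "0 < \<gamma>" and \<iota>: "0 \<le> \<iota>"
    and coord: "\<And>x a. x \<in> X \<Longrightarrow> a \<in> Act x \<Longrightarrow> L' x a - L x a \<le> \<iota> / (\<gamma> * real_plan hist mus x a) + \<gamma> * L x a"
    and \<kappa>: "(\<Sum>x\<in>X. \<Sum>a\<in>Act x. real_plan hist d x a / real_plan hist mus x a) \<le> \<kappa>"
  shows "ip X Act (\<lambda>x a. L' x a - L x a) (real_plan hist d) \<le> \<iota> / \<gamma> * \<kappa> + \<gamma> * ip X Act L (real_plan hist d)"
proof -
  have "ip X Act (\<lambda>x a. L' x a - L x a) (real_plan hist d)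
      \<le> ip X Act (\<lambda>x a. \<iota> / (\<gamma> * real_plan hist mus x a) + \<gamma> * L x a) (real_plan hist d)"
    unfolding ip_def using coord real_plan_nonneg_le_one(1)[OF g d]
    by (intro sum_mono mult_right_mono) auto
  also have "\<dots> = \<iota> / \<gamma> * (\<Sum>x\<in>X. \<Sum>a\<in>Act x. real_plan hist d x a / real_plan hist mus x a)
      + \<gamma> * ip X Act L (real_plan hist d)"
    unfolding ip_def by (simp add: sum.distrib sum_distrib_left algebra_simps)
  also have "\<dots> \<le> \<iota> / \<gamma> * \<kappa> + \<gamma> * ip X Act L (real_plan hist d)"
    using \<kappa> \<gamma> \<iota> by (simp add: divide_right_mono mult_left_mono)
  finally show ?thesis .
qed

text \<open>Replacing the comparator by \<open>\<mu>\<^sup>s\<close> when that has smaller cumulative loss keeps its loss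
  below the bound \<open>B\<close> available for \<open>\<mu>\<^sup>s\<close>.\<close>

lemma exists_policy_loss_gap_le:
  assumes g: "game_struct X Act dep H hist" and mus: "positive_policy X Act mus"
    and d: "d \<in> policies X Act" and \<gamma>: "0 < \<gamma>" and \<iota>: "0 \<le> \<iota>"
    and coord: "\<And>x a. x \<in> X \<Longrightarrow> a \<in> Act x \<Longrightarrow> L' x a - L x a \<le> \<iota> / (\<gamma> * real_plan hist mus x a) + \<gamma> * L x a"
    and \<kappa>: "\<And>d. d \<in> policies X Act \<Longrightarrow>
        (\<Sum>x\<in>X. \<Sum>a\<in>Act x. real_plan hist d x a / real_plan hist mus x a) \<le> \<kappa>"
    and B: "ip X Act L (real_plan hist mus) \<le> B"
  shows "\<exists>d'\<in>policies X Act. ip X Act L (real_plan hist d') \<le> ip X Act L (real_plan hist d) \<and>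
      ip X Act L' (real_plan hist d') - ip X Act L (real_plan hist d') \<le> \<iota> / \<gamma> * \<kappa> + \<gamma> * B"
proof -
  define d' where "d' = (if ip X Act L (real_plan hist d) \<le> ip X Act L (real_plan hist mus) then d else mus)"
  have d': "d' \<in> policies X Act" "ip X Act L (real_plan hist d') \<le> ip X Act L (real_plan hist d)"
    "ip X Act L (real_plan hist d') \<le> B"
    unfolding d'_def using d mus B unfolding positive_policy_def by auto
  have "ip X Act (\<lambda>x a. L' x a - L x a) (real_plan hist d') \<le> \<iota> / \<gamma> * \<kappa> + \<gamma> * ip X Act L (real_plan hist d')"
    by (rule ip_diff_real_plan_le[OF g mus d'(1) \<gamma> \<iota> coord \<kappa>[OF d'(1)]])
  also have "\<dots> \<le> \<iota> / \<gamma> * \<kappa> + \<gamma> * B"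
    using d'(3) \<gamma> by simp
  finally show ?thesis
    using d' unfolding ip_diff_left by blast
qed

text \<open>The hypotheses \<open>iterates\<close> and \<open>coord\<close> hold outside the large-deviation events of the
  two exponential supermartingales; the case \<open>s > H T\<close> needs only the trivial bound \<open>H T\<close>.\<close>

lemma sum_ip_le_of_concentration:
  fixes l h m :: "nat \<Rightarrow> 'x \<Rightarrow> 'a \<Rightarrow> real"
  assumes g: "game_struct X Act dep H hist" and mus: "positive_policy X Act mus"
    and s: "0 < s" "s\<^sup>2 = \<iota> * real H * \<kappa> * real T" and \<iota>: "0 < \<iota>"
    and l: "\<And>t x a. t \<in> {1..T} \<Longrightarrow> x \<in> X \<Longrightarrow> a \<in> Act x \<Longrightarrow> 0 \<le> l t x a"
    and lH: "\<And>t. t \<in> {1..T} \<Longrightarrow> ip X Act (l t) (real_plan hist mus) \<le> real H"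
    and hH: "\<And>t. t \<in> {1..T} \<Longrightarrow> ip X Act (h t) (real_plan hist mus) \<le> real H"
    and \<kappa>: "\<And>d. d \<in> policies X Act \<Longrightarrow>
        (\<Sum>x\<in>X. \<Sum>a\<in>Act x. real_plan hist d x a / real_plan hist mus x a) \<le> \<kappa>"
    and iterates: "(\<Sum>t\<in>{1..T}. ip X Act (\<lambda>x a. l t x a - h t x a) (real_plan hist (m t))) \<le> 3 / 2 * s"
    and coord: "\<And>x a. s \<le> real H * real T \<Longrightarrow> x \<in> X \<Longrightarrow> a \<in> Act x \<Longrightarrow>
        (\<Sum>t\<in>{1..T}. h t x a) - (\<Sum>t\<in>{1..T}. l t x a)
        \<le> \<iota> / (s / (real H * real T) * real_plan hist mus x a) + s / (real H * real T) * (\<Sum>t\<in>{1..T}. l t x a)"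
    and d: "d \<in> policies X Act"
  shows "(\<Sum>t\<in>{1..T}. ip X Act (l t) (\<lambda>x a. real_plan hist (m t) x a - real_plan hist d x a))
      \<le> max (regret X Act hist T h m) 0 + 4 * s"
proof -
  define L where "L x a = (\<Sum>t\<in>{1..T}. l t x a)" for x a
  define L' where "L' x a = (\<Sum>t\<in>{1..T}. h t x a)" for x a
  define K where "K = (\<Sum>t\<in>{1..T}. ip X Act (l t) (real_plan hist (m t)))"
  define K' where "K' = (\<Sum>t\<in>{1..T}. ip X Act (h t) (real_plan hist (m t)))"
  have musP: "mus \<in> policies X Act"
    using mus unfolding positive_policy_def by auto
  have lhs: "(\<Sum>t\<in>{1..T}. ip X Act (l t) (\<lambda>x a. real_plan hist (m t) x a - real_plan hist d x a))
      = K - ip X Act L (real_plan hist d)"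
    unfolding K_def L_def by (rule sum_ip_diff_real_plan)
  have K: "K - K' \<le> 3 / 2 * s"
    using iterates unfolding K_def K'_def ip_diff_left sum_subtractf .
  have K': "K' - ip X Act L' (real_plan hist d') \<le> regret X Act hist T h m" if "d' \<in> policies X Act" for d'
    using regret_eq_Max_pure(2)[OF g that, where T = T and l = h and m = m] unfolding K'_def L'_def sum_ip_diff_real_plan .
  have L_mus: "ip X Act L (real_plan hist mus) \<le> real H * real T"
    and L'_mus: "ip X Act L' (real_plan hist mus) \<le> real H * real T"
    unfolding L_def L'_def ip_sum_left using sum_mono[of "{1..T}", OF lH] sum_mono[of "{1..T}", OF hH]
    by (auto simp: mult.commute)
  show ?thesis
  proof (cases "s \<le> real H * real T")
    case True
    define \<gamma> where "\<gamma> = s / (real H * real T)"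
    have HT: "0 < real H * real T" and \<gamma>: "0 < \<gamma>"
      using True s unfolding \<gamma>_def by auto
    obtain d' where d': "d' \<in> policies X Act" "ip X Act L (real_plan hist d') \<le> ip X Act L (real_plan hist d)"
      "ip X Act L' (real_plan hist d') - ip X Act L (real_plan hist d') \<le> \<iota> / \<gamma> * \<kappa> + \<gamma> * (real H * real T)"
      using exists_policy_loss_gap_le[OF g mus d \<gamma> less_imp_le[OF \<iota>] _ \<kappa> L_mus, of L'] coord[OF True]
      unfolding L_def L'_def \<gamma>_def by blast
    have "\<iota> / \<gamma> * \<kappa> = s"
      unfolding \<gamma>_def using s HT by (simp add: field_simps power2_eq_square)
    moreover have "\<gamma> * (real H * real T) = s"
      unfolding \<gamma>_def using HT by (metis less_irrefl nonzero_eq_divide_eq)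
    ultimately show ?thesis
      unfolding lhs using K K'[OF d'(1)] d'(2,3) max.cobounded1[of "regret X Act hist T h m" 0] s(1) by linarith
  next
    case False
    have "0 \<le> ip X Act L (real_plan hist d)"
      unfolding L_def using l real_plan_nonneg_le_one(1)[OF g d]
      by (intro ip_nonneg sum_nonneg) auto
    then show ?thesis
      unfolding lhs using K K'[OF musP] L'_mus False max.cobounded1[of "regret X Act hist T h m" 0] s(1) by linarith
  qed
qed

lemma regret_le_of_concentration:
  fixes l h m :: "nat \<Rightarrow> 'x \<Rightarrow> 'a \<Rightarrow> real"
  assumes g: "game_struct X Act dep H hist" and mus: "positive_policy X Act mus"
    and s: "0 < s" "s\<^sup>2 = \<iota> * real H * \<kappa> * real T" and \<iota>: "0 < \<iota>"
    and l: "\<And>t x a. t \<in> {1..T} \<Longrightarrow> x \<in> X \<Longrightarrow> a \<in> Act x \<Longrightarrow> 0 \<le> l t x a"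
    and lH: "\<And>t. t \<in> {1..T} \<Longrightarrow> ip X Act (l t) (real_plan hist mus) \<le> real H"
    and hH: "\<And>t. t \<in> {1..T} \<Longrightarrow> ip X Act (h t) (real_plan hist mus) \<le> real H"
    and \<kappa>: "\<And>d. d \<in> policies X Act \<Longrightarrow>
        (\<Sum>x\<in>X. \<Sum>a\<in>Act x. real_plan hist d x a / real_plan hist mus x a) \<le> \<kappa>"
    and iterates: "(\<Sum>t\<in>{1..T}. ip X Act (\<lambda>x a. l t x a - h t x a) (real_plan hist (m t))) \<le> 3 / 2 * s"
    and coord: "\<And>x a. s \<le> real H * real T \<Longrightarrow> x \<in> X \<Longrightarrow> a \<in> Act x \<Longrightarrow>
        (\<Sum>t\<in>{1..T}. h t x a) - (\<Sum>t\<in>{1..T}. l t x a)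
        \<le> \<iota> / (s / (real H * real T) * real_plan hist mus x a) + s / (real H * real T) * (\<Sum>t\<in>{1..T}. l t x a)"
  shows "regret X Act hist T l m \<le> max (regret X Act hist T h m) 0 + 4 * s"
  unfolding regret_def[of X Act hist T l m]
proof (rule cSUP_least)
  show "policies X Act \<noteq> {}"
    using mus unfolding positive_policy_def by auto
qed (rule sum_ip_le_of_concentration[OF assms])

section \<open>The sampling model\<close>

lemma sum_sum_eq_sum_Sigma:
  assumes "game_struct X Act dep H hist"
  shows "(\<Sum>x\<in>X. \<Sum>a\<in>Act x. f x a) = (\<Sum>p\<in>Sigma X Act. f (fst p) (snd p))"
  using game_structD(1,2)[OF assms] by (subst sum.Sigma) (auto simp: split_beta)

lemma ip_eq_sum_Sigma:
  assumes "game_struct X Act dep H hist"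
  shows "ip X Act f g = (\<Sum>p\<in>Sigma X Act. f (fst p) (snd p) * g (fst p) (snd p))"
  unfolding ip_def by (rule sum_sum_eq_sum_Sigma[OF assms])

lemma sum_real_plan_div_le_kappa:
  assumes g: "game_struct X Act dep H hist" and mus: "positive_policy X Act mus"
    and d: "d \<in> policies X Act"
  shows "(\<Sum>x\<in>X. \<Sum>a\<in>Act x. real_plan hist d x a / real_plan hist mus x a) \<le> kappa X Act hist mus"
  unfolding kappa_def
proof (rule cSUP_upper[OF d bdd_aboveI2])
  fix d' assume "d' \<in> policies X Act"
  then show "(\<Sum>x\<in>X. \<Sum>a\<in>Act x. real_plan hist d' x a / real_plan hist mus x a)
      \<le> (\<Sum>x\<in>X. \<Sum>a\<in>Act x. 1 / real_plan hist mus x a)"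
    using real_plan_nonneg_le_one[OF g] real_plan_pos[OF g mus]
    by (intro sum_mono divide_right_mono) (auto simp: less_imp_le)
qed

lemma num_actions_le_kappa:
  assumes g: "game_struct X Act dep H hist" and mus: "positive_policy X Act mus"
  shows "real (num_actions X Act) \<le> kappa X Act hist mus"
proof -
  have "(\<Sum>x\<in>X. \<Sum>a\<in>Act x. real_plan hist mus x a / real_plan hist mus x a) = (\<Sum>x\<in>X. \<Sum>a\<in>Act x. 1)"
    using real_plan_pos[OF g mus] by (intro sum.cong refl) (simp add: less_imp_neq[symmetric])
  also have "\<dots> = real (num_actions X Act)"
    unfolding num_actions_def by simp
  finally have "(\<Sum>x\<in>X. \<Sum>a\<in>Act x. real_plan hist mus x a / real_plan hist mus x a) = real (num_actions X Act)" .
  moreover have "mus \<in> policies X Act"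
    using mus unfolding positive_policy_def by auto
  ultimately show ?thesis
    using sum_real_plan_div_le_kappa[OF g mus] by metis
qed

lemma card_visits_le:
  assumes "\<And>x. x \<in> X \<Longrightarrow> dep x \<in> {1..H}"
  shows "card {p \<in> Sigma X Act. xs (dep (fst p)) = fst p \<and> as (dep (fst p)) = snd p} \<le> H"
proof -
  have "{p \<in> Sigma X Act. xs (dep (fst p)) = fst p \<and> as (dep (fst p)) = snd p} \<subseteq> (\<lambda>h. (xs h, as h)) ` {1..H}"
    using assms by force
  then have "card {p \<in> Sigma X Act. xs (dep (fst p)) = fst p \<and> as (dep (fst p)) = snd p}
      \<le> card ((\<lambda>h. (xs h, as h)) ` {1..H})"
    by (intro card_mono) auto
  also have "\<dots> \<le> H"
    using card_image_le[of "{1..H}"] by simp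
  finally show ?thesis .
qed

locale sampled_game =
  fixes M :: "'w measure" and F :: "nat \<Rightarrow> 'w measure" and T :: nat
    and X :: "'x set" and Act :: "'x \<Rightarrow> 'a set" and dep :: "'x \<Rightarrow> nat" and H :: nat
    and hist :: "'x \<Rightarrow> ('x \<times> 'a) list"
    and mus :: "'x \<Rightarrow> 'a \<Rightarrow> real"
    and mu :: "nat \<Rightarrow> 'w \<Rightarrow> 'x \<Rightarrow> 'a \<Rightarrow> real"
    and nu :: "nat \<Rightarrow> 'w \<Rightarrow> 'n"
    and pnu :: "'n \<Rightarrow> 'x \<Rightarrow> real" and lnu :: "'n \<Rightarrow> 'x \<Rightarrow> 'a \<Rightarrow> real"
    and xt :: "nat \<Rightarrow> nat \<Rightarrow> 'w \<Rightarrow> 'x" and act :: "nat \<Rightarrow> nat \<Rightarrow> 'w \<Rightarrow> 'a"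
    and lt :: "nat \<Rightarrow> nat \<Rightarrow> 'w \<Rightarrow> real"
  assumes game: "game_struct X Act dep H hist"
    and prob: "prob_space M"
    and filt_sub: "\<And>t. t \<le> T \<Longrightarrow> subalgebra M (F t)"
    and filt_mono: "\<And>s t. s \<le> t \<Longrightarrow> t \<le> T \<Longrightarrow> sets (F s) \<subseteq> sets (F t)"
    and mus_pos: "positive_policy X Act mus"
    and pnu_range: "\<And>v x. x \<in> X \<Longrightarrow> 0 \<le> pnu v x \<and> pnu v x \<le> 1"
    and lnu_range: "\<And>v x a. x \<in> X \<Longrightarrow> a \<in> Act x \<Longrightarrow> 0 \<le> lnu v x a \<and> lnu v x a \<le> 1"
    and mu_policy: "\<And>t \<omega>. t \<in> {1..T} \<Longrightarrow> \<omega> \<in> space M \<Longrightarrow> mu t \<omega> \<in> policies X Act"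
    and mu_meas: "\<And>t x a. t \<in> {1..T} \<Longrightarrow> x \<in> X \<Longrightarrow> a \<in> Act x \<Longrightarrow>
                     (\<lambda>\<omega>. mu t \<omega> x a) \<in> borel_measurable (F (t - 1))"
    and nu_meas_p: "\<And>t x. t \<in> {1..T} \<Longrightarrow> x \<in> X \<Longrightarrow>
                     (\<lambda>\<omega>. pnu (nu t \<omega>) x) \<in> borel_measurable (F (t - 1))"
    and nu_meas_l: "\<And>t x a. t \<in> {1..T} \<Longrightarrow> x \<in> X \<Longrightarrow> a \<in> Act x \<Longrightarrow>
                     (\<lambda>\<omega>. lnu (nu t \<omega>) x a) \<in> borel_measurable (F (t - 1))"
    and traj_meas_x: "\<And>t h. t \<in> {1..T} \<Longrightarrow> h \<in> {1..H} \<Longrightarrow> xt t h \<in> measurable (F t) (count_space UNIV)"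
    and traj_meas_a: "\<And>t h. t \<in> {1..T} \<Longrightarrow> h \<in> {1..H} \<Longrightarrow> act t h \<in> measurable (F t) (count_space UNIV)"
    and traj_meas_l: "\<And>t h. t \<in> {1..T} \<Longrightarrow> h \<in> {1..H} \<Longrightarrow> lt t h \<in> borel_measurable (F t)"
    and traj_valid: "\<And>t h \<omega>. t \<in> {1..T} \<Longrightarrow> h \<in> {1..H} \<Longrightarrow> \<omega> \<in> space M \<Longrightarrow>
                     xt t h \<omega> \<in> X \<and> dep (xt t h \<omega>) = h \<and> act t h \<omega> \<in> Act (xt t h \<omega>)
                     \<and> 0 \<le> lt t h \<omega> \<and> lt t h \<omega> \<le> 1"
    and traj_prob: "\<And>t x a. t \<in> {1..T} \<Longrightarrow> x \<in> X \<Longrightarrow> a \<in> Act x \<Longrightarrow>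
                     AE \<omega> in M. real_cond_exp M (F (t - 1))
                        (indicator {\<omega>' \<in> space M. xt t (dep x) \<omega>' = x \<and> act t (dep x) \<omega>' = a}) \<omega>
                      = pnu (nu t \<omega>) x * real_plan hist mus x a"
    and traj_loss: "\<And>t x a. t \<in> {1..T} \<Longrightarrow> x \<in> X \<Longrightarrow> a \<in> Act x \<Longrightarrow>
                     AE \<omega> in M. real_cond_exp M (F (t - 1))
                        (\<lambda>\<omega>'. lt t (dep x) \<omega>' *
                           indicator {\<omega>'' \<in> space M. xt t (dep x) \<omega>'' = x \<and> act t (dep x) \<omega>'' = a} \<omega>') \<omega>
                      = pnu (nu t \<omega>) x * real_plan hist mus x a * lnu (nu t \<omega>) x a"

sublocale sampled_game \<subseteq> prob_space M
  by (rule prob)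

context sampled_game
begin

text \<open>\<open>true_loss t x a\<close> is the paper's \<open>\<ell>\<^sup>t(x, a) = p\<^sub>1\<^sub>:(x) \<ell>\<^sub>h(x, a)\<close> for the max-player policy
  \<open>\<nu>\<^sup>t\<close>, and \<open>est_loss t x a\<close> its importance-weighted estimator.\<close>

definition visits :: "nat \<Rightarrow> 'x \<Rightarrow> 'a \<Rightarrow> 'w \<Rightarrow> bool" where
  "visits t x a \<omega> \<longleftrightarrow> xt t (dep x) \<omega> = x \<and> act t (dep x) \<omega> = a"

definition true_loss :: "nat \<Rightarrow> 'x \<Rightarrow> 'a \<Rightarrow> 'w \<Rightarrow> real" where
  "true_loss t x a \<omega> = pnu (nu t \<omega>) x * lnu (nu t \<omega>) x a"

definition est_loss :: "nat \<Rightarrow> 'x \<Rightarrow> 'a \<Rightarrow> 'w \<Rightarrow> real" where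
  "est_loss t x a \<omega> = (if visits t x a \<omega> then lt t (dep x) \<omega> / real_plan hist mus x a else 0)"

lemma finite_measure_subalgebra_prev:
  assumes "t \<in> {1..T}"
  shows "finite_measure_subalgebra M (F (t - 1))"
  using assms filt_sub by unfold_locales auto

lemma measurable_filtration_M:
  assumes "t \<le> T" and "f \<in> measurable (F t) N"
  shows "f \<in> measurable M N"
  using measurable_from_subalg[OF filt_sub[OF assms(1)] assms(2)] .

lemma measurable_prev:
  assumes t: "t \<in> {1..T}" and f: "f \<in> borel_measurable (F (t - 1))"
  shows "f \<in> borel_measurable (F t)" and "f \<in> borel_measurable M"
proof -
  have "subalgebra (F t) (F (t - 1))"
    using filt_sub[of t] filt_sub[of "t - 1"] filt_mono[of "t - 1" t] t unfolding subalgebra_def by auto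
  then show "f \<in> borel_measurable (F t)"
    using f by (rule measurable_from_subalg)
  then show "f \<in> borel_measurable M"
    using t by (intro measurable_filtration_M) auto
qed

lemma pred_visits:
  assumes t: "t \<in> {1..T}" and x: "x \<in> X"
  shows "Measurable.pred (F t) (visits t x a)"
proof -
  have h: "dep x \<in> {1..H}"
    using game_structD(4)[OF game x] .
  have "{\<omega> \<in> space (F t). visits t x a \<omega>}
      = (xt t (dep x) -` {x} \<inter> space (F t)) \<inter> (act t (dep x) -` {a} \<inter> space (F t))"
    unfolding visits_def by auto
  also have "\<dots> \<in> sets (F t)"
    using measurable_sets[OF traj_meas_x[OF t h]] measurable_sets[OF traj_meas_a[OF t h]] by auto
  finally show ?thesis
    unfolding Measurable.pred_def .
qed

lemma est_loss_measurable:
  assumes t: "t \<in> {1..T}" and x: "x \<in> X"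
  shows "est_loss t x a \<in> borel_measurable (F t)" and "est_loss t x a \<in> borel_measurable M"
proof -
  show "est_loss t x a \<in> borel_measurable (F t)"
    using pred_visits[OF t x] traj_meas_l[OF t game_structD(4)[OF game x]]
    unfolding est_loss_def by measurable
  then show "est_loss t x a \<in> borel_measurable M"
    using t by (intro measurable_filtration_M) auto
qed

lemma true_loss_measurable:
  assumes "t \<in> {1..T}" and "x \<in> X" and "a \<in> Act x"
  shows "true_loss t x a \<in> borel_measurable (F (t - 1))"
  using nu_meas_p[OF assms(1,2)] nu_meas_l[OF assms] unfolding true_loss_def by measurable

lemma real_plan_iterate_measurable:
  assumes "t \<in> {1..T}" and "x \<in> X" and "a \<in> Act x"
  shows "(\<lambda>\<omega>. real_plan hist (mu t \<omega>) x a) \<in> borel_measurable (F (t - 1))"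
  using assms by (intro borel_measurable_real_plan[OF game] mu_meas) auto

lemma true_loss_bounds:
  assumes "x \<in> X" and "a \<in> Act x"
  shows "0 \<le> true_loss t x a \<omega>" and "true_loss t x a \<omega> \<le> 1"
  using pnu_range[OF assms(1)] lnu_range[OF assms] unfolding true_loss_def
  by (auto simp: mult_le_one)

lemma est_loss_bounds:
  assumes t: "t \<in> {1..T}" and \<omega>: "\<omega> \<in> space M" and x: "x \<in> X" and a: "a \<in> Act x"
  shows "0 \<le> est_loss t x a \<omega>" and "real_plan hist mus x a * est_loss t x a \<omega> \<le> 1"
  using traj_valid[OF t game_structD(4)[OF game x] \<omega>] real_plan_pos[OF game mus_pos x a]
  unfolding est_loss_def by auto

lemma est_loss_unbiased:
  assumes t: "t \<in> {1..T}" and x: "x \<in> X" and a: "a \<in> Act x"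
  shows "AE \<omega> in M. real_cond_exp M (F (t - 1)) (est_loss t x a) \<omega> = true_loss t x a \<omega>"
proof -
  interpret finite_measure_subalgebra M "F (t - 1)"
    by (rule finite_measure_subalgebra_prev[OF t])
  define Q where "Q = real_plan hist mus x a"
  have Q: "0 < Q"
    unfolding Q_def by (rule real_plan_pos[OF game mus_pos x a])
  define Y where "Y \<omega> = lt t (dep x) \<omega> * indicator {\<omega>' \<in> space M. visits t x a \<omega>'} \<omega>" for \<omega>
  have est: "\<omega> \<in> space M \<Longrightarrow> est_loss t x a \<omega> = Y \<omega> / Q" for \<omega>
    unfolding est_loss_def Y_def Q_def by simp
  have est_meas: "est_loss t x a \<in> borel_measurable M"
    using est_loss_measurable(2)[OF t x] by auto
  have "(\<lambda>\<omega>. Q * est_loss t x a \<omega>) \<in> borel_measurable M"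
    using est_meas by measurable
  then have Y_meas: "Y \<in> borel_measurable M"
    by (rule measurable_cong[THEN iffD1, rotated]) (use est Q in simp)
  have "integrable M Y"
    using Y_meas traj_valid[OF t game_structD(4)[OF game x]]
    by (intro integrable_bounded[where B = 1]) (auto simp: Y_def indicator_def)
  then have "AE \<omega> in M. real_cond_exp M (F (t - 1)) (\<lambda>\<omega>. Y \<omega> / Q) \<omega> = real_cond_exp M (F (t - 1)) Y \<omega> / Q"
    by (rule real_cond_exp_cdiv)
  moreover have "AE \<omega> in M. real_cond_exp M (F (t - 1)) (est_loss t x a) \<omega>
      = real_cond_exp M (F (t - 1)) (\<lambda>\<omega>. Y \<omega> / Q) \<omega>"
    using est Y_meas est_meas by (intro real_cond_exp_cong AE_I2) auto
  moreover have "AE \<omega> in M. real_cond_exp M (F (t - 1)) Y \<omega> = pnu (nu t \<omega>) x * Q * lnu (nu t \<omega>) x a"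
    using traj_loss[OF t x a] unfolding Y_def Q_def visits_def .
  ultimately show ?thesis
    by eventually_elim (use Q in \<open>simp add: true_loss_def\<close>)
qed

lemma card_visits:
  "card {p \<in> Sigma X Act. visits t (fst p) (snd p) \<omega>} \<le> H"
  using card_visits_le[OF game_structD(4)[OF game]] unfolding visits_def .

lemma est_loss_ip_le:
  assumes t: "t \<in> {1..T}" and \<omega>: "\<omega> \<in> space M"
  shows "ip X Act (\<lambda>x a. est_loss t x a \<omega>) (real_plan hist mus) \<le> real H"
proof -
  have "ip X Act (\<lambda>x a. est_loss t x a \<omega>) (real_plan hist mus)
      = (\<Sum>p\<in>Sigma X Act. if visits t (fst p) (snd p) \<omega> then lt t (dep (fst p)) \<omega> else 0)"
    unfolding ip_eq_sum_Sigma[OF game] using real_plan_pos[OF game mus_pos]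
    by (intro sum.cong refl) (auto simp: est_loss_def less_imp_neq[symmetric])
  also have "\<dots> \<le> real H"
    using traj_valid[OF t game_structD(4)[OF game] \<omega>] game_structD(1,2)[OF game]
    by (intro sum_if_le_card card_visits) auto
  finally show ?thesis .
qed

text \<open>The summand is the probability that round \<open>t\<close> visits \<open>p\<close>, so the sum is the expected
  number of visited pairs.\<close>

lemma expected_visits_le:
  assumes t: "t \<in> {1..T}"
  shows "AE \<omega> in M. (\<Sum>p\<in>Sigma X Act. pnu (nu t \<omega>) (fst p) * real_plan hist mus (fst p) (snd p)) \<le> real H"
proof -
  interpret finite_measure_subalgebra M "F (t - 1)"
    by (rule finite_measure_subalgebra_prev[OF t])
  define S where "S = Sigma X Act"
  have S: "finite S" "\<And>p. p \<in> S \<Longrightarrow> fst p \<in> X \<and> snd p \<in> Act (fst p)"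
    using game_structD(1,2)[OF game] unfolding S_def by auto
  define I where "I p = (indicator {\<omega>' \<in> space M. visits t (fst p) (snd p) \<omega>'} :: 'w \<Rightarrow> real)" for p
  have I_meas: "I p \<in> borel_measurable M" if "p \<in> S" for p
    using measurable_from_subalg[OF filt_sub pred_visits[OF t, of "fst p" "snd p"]] S(2)[OF that] t
    unfolding I_def by (auto intro: borel_measurable_indicator simp: Measurable.pred_def)
  have I_abs: "\<bar>I p \<omega>\<bar> \<le> 1" for p \<omega>
    unfolding I_def by (simp add: indicator_def)
  have "(\<Sum>p\<in>S. I p \<omega>) \<le> real H" if "\<omega> \<in> space M" for \<omega>
  proof -
    have "(\<Sum>p\<in>S. I p \<omega>) = (\<Sum>p\<in>S. if visits t (fst p) (snd p) \<omega> then 1 else 0)"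
      using that unfolding I_def by (intro sum.cong) auto
    also have "\<dots> \<le> real H"
      using S(1) card_visits[of t \<omega>] unfolding S_def by (intro sum_if_le_card) auto
    finally show ?thesis .
  qed
  then have "AE \<omega> in M. real_cond_exp M (F (t - 1)) (\<lambda>\<omega>. 0 + (\<Sum>p\<in>S. 1 * I p \<omega>)) \<omega> \<le> real H"
    using S I_meas order_trans[OF sum_abs sum_bounded_above[of S "\<lambda>p. \<bar>I p _\<bar>" 1]] I_abs
    by (intro real_cond_exp_le_c integrable_bounded[where B = "real (card S)"] borel_measurable_sum) auto
  moreover have "AE \<omega> in M. real_cond_exp M (F (t - 1)) (\<lambda>\<omega>. 0 + (\<Sum>p\<in>S. 1 * I p \<omega>)) \<omega>
      = 0 + (\<Sum>p\<in>S. 1 * real_cond_exp M (F (t - 1)) (I p) \<omega>)"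
    using S I_meas I_abs by (intro real_cond_exp_linear_combination integrable_bounded[where B = 1]) auto
  moreover have "AE \<omega> in M. \<forall>p\<in>S. real_cond_exp M (F (t - 1)) (I p) \<omega>
      = pnu (nu t \<omega>) (fst p) * real_plan hist mus (fst p) (snd p)"
    using S traj_prob[OF t] unfolding I_def visits_def by (intro AE_finite_allI) auto
  ultimately show ?thesis
    unfolding S_def[symmetric] by eventually_elim simp
qed

lemma AE_true_loss_ip_le:
  "AE \<omega> in M. \<forall>t\<in>{1..T}. ip X Act (\<lambda>x a. true_loss t x a \<omega>) (real_plan hist mus) \<le> real H"
proof (rule AE_finite_allI[OF finite_atLeastAtMost])
  fix t assume t: "t \<in> {1..T}"
  have le: "ip X Act (\<lambda>x a. true_loss t x a \<omega>) (real_plan hist mus)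
      \<le> (\<Sum>p\<in>Sigma X Act. pnu (nu t \<omega>) (fst p) * real_plan hist mus (fst p) (snd p))" for \<omega>
    unfolding ip_eq_sum_Sigma[OF game] true_loss_def
    using pnu_range lnu_range real_plan_nonneg_le_one(1)[OF game] mus_pos
    by (intro sum_mono mult_right_mono) (auto simp: mult_left_le positive_policy_def)
  show "AE \<omega> in M. ip X Act (\<lambda>x a. true_loss t x a \<omega>) (real_plan hist mus) \<le> real H"
    using expected_visits_le[OF t] by eventually_elim (rule order_trans[OF le])
qed

lemma scaled_est_loss_cond_exp:
  assumes t: "t \<in> {1..T}" and x: "x \<in> X" and a: "a \<in> Act x"
  shows "AE \<omega> in M. real_cond_exp M (F (t - 1)) (\<lambda>\<omega>. c * est_loss t x a \<omega>) \<omega> = c * true_loss t x a \<omega>"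
proof -
  interpret finite_measure_subalgebra M "F (t - 1)"
    by (rule finite_measure_subalgebra_prev[OF t])
  have "integrable M (est_loss t x a)"
    using est_loss_measurable(2)[OF t x]
      est_loss_bounds[OF t _ x a] real_plan_pos[OF game mus_pos x a]
    by (intro integrable_bounded[where B = "1 / real_plan hist mus x a"]) (auto simp: field_simps)
  then have "AE \<omega> in M. real_cond_exp M (F (t - 1)) (\<lambda>\<omega>. c * est_loss t x a \<omega>) \<omega>
      = c * real_cond_exp M (F (t - 1)) (est_loss t x a) \<omega>"
    by (rule real_cond_exp_cmult)
  with est_loss_unbiased[OF t x a] show ?thesis
    by eventually_elim simp
qed

definition coordinate_deviation :: "real \<Rightarrow> 'x \<Rightarrow> 'a \<Rightarrow> nat \<Rightarrow> 'w \<Rightarrow> real" where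
  "coordinate_deviation \<gamma> x a t \<omega> =
     \<gamma> * real_plan hist mus x a * (est_loss t x a \<omega> - (1 + \<gamma>) * true_loss t x a \<omega>)"

lemma coordinate_deviation_measurable:
  assumes t: "t \<in> {1..T}" and x: "x \<in> X" and a: "a \<in> Act x"
  shows "coordinate_deviation \<gamma> x a t \<in> borel_measurable (F t)"
  unfolding coordinate_deviation_def[abs_def]
  using est_loss_measurable(1)[OF t x] measurable_prev(1)[OF t true_loss_measurable[OF t x a]]
  by measurable

lemma coordinate_deviation_tail:
  assumes x: "x \<in> X" and a: "a \<in> Act x" and \<gamma>: "0 \<le> \<gamma>" "\<gamma> \<le> 1"
  shows "measure M {\<omega> \<in> space M. \<iota> \<le> (\<Sum>t\<in>{1..T}. coordinate_deviation \<gamma> x a t \<omega>)} \<le> exp (- \<iota>)"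
proof (rule exp_sum_adapted_tail_bound[OF filt_sub filt_mono, where C = 1])
  fix t assume t: "t \<in> {1..T}"
  interpret finite_measure_subalgebra M "F (t - 1)"
    by (rule finite_measure_subalgebra_prev[OF t])
  define Q where "Q = real_plan hist mus x a"
  have Q: "0 < Q"
    unfolding Q_def by (rule real_plan_pos[OF game mus_pos x a])
  have eq: "coordinate_deviation \<gamma> x a t
      = (\<lambda>\<omega>. \<gamma> * (Q * est_loss t x a \<omega>) - (\<gamma> + \<gamma>\<^sup>2) * (Q * true_loss t x a \<omega>))"
    unfolding coordinate_deviation_def Q_def by (simp add: fun_eq_iff algebra_simps power2_eq_square)
  have est: "0 \<le> Q * est_loss t x a \<omega> \<and> Q * est_loss t x a \<omega> \<le> 1" if "\<omega> \<in> space M" for \<omega>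
    using est_loss_bounds[OF t that x a] Q unfolding Q_def by simp
  have true: "0 \<le> Q * true_loss t x a \<omega> \<and> Q * true_loss t x a \<omega> \<le> 1" for \<omega>
    using true_loss_bounds[OF x a] real_plan_nonneg_le_one[OF game _ x a] mus_pos
    unfolding Q_def positive_policy_def by (auto simp: mult_le_one)
  show "coordinate_deviation \<gamma> x a t \<in> borel_measurable (F t)"
    by (rule coordinate_deviation_measurable[OF t x a])
  show "coordinate_deviation \<gamma> x a t \<omega> \<le> 1" if "\<omega> \<in> space M" for \<omega>
    unfolding eq using est[OF that] true[of \<omega>] \<gamma> mult_left_le[of _ \<gamma>]
    by (smt (verit) mult_nonneg_nonneg zero_le_power2)
  show "AE \<omega> in M. real_cond_exp M (F (t - 1)) (\<lambda>\<omega>. exp (coordinate_deviation \<gamma> x a t \<omega>)) \<omega> \<le> 1"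
    unfolding eq
  proof (rule real_cond_exp_exp_upper_deviation_le_one[OF _ est _ _ true \<gamma>])
    show "(\<lambda>\<omega>. Q * est_loss t x a \<omega>) \<in> borel_measurable M"
      using est_loss_measurable(2)[OF t x] by measurable
    show "(\<lambda>\<omega>. Q * true_loss t x a \<omega>) \<in> borel_measurable (F (t - 1))"
      using true_loss_measurable[OF t x a] by measurable
  qed (use scaled_est_loss_cond_exp[OF t x a] in auto)
qed

definition iterate_deviation :: "real \<Rightarrow> nat \<Rightarrow> 'w \<Rightarrow> real" where
  "iterate_deviation \<eta> t \<omega> =
     \<eta> * ip X Act (\<lambda>x a. true_loss t x a \<omega> - est_loss t x a \<omega>) (real_plan hist (mu t \<omega>))
     - \<eta>\<^sup>2 * real H / 2 * kappa X Act hist mus"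

text \<open>At most \<open>H\<close> pairs are visited per episode, so Cauchy-Schwarz bounds the square of the
  estimated loss of the iterate by \<open>H\<close> times its second moment.\<close>

lemma iterate_est_loss_square_le:
  assumes t: "t \<in> {1..T}" and \<omega>: "\<omega> \<in> space M"
  shows "(\<Sum>p\<in>Sigma X Act. real_plan hist (mu t \<omega>) (fst p) (snd p) * est_loss t (fst p) (snd p) \<omega>)\<^sup>2
    \<le> real H * (\<Sum>p\<in>Sigma X Act. real_plan hist (mu t \<omega>) (fst p) (snd p) * est_loss t (fst p) (snd p) \<omega>
        / real_plan hist mus (fst p) (snd p))"
proof -
  define S where "S = Sigma X Act"
  define P where "P p = real_plan hist (mu t \<omega>) (fst p) (snd p)" for p
  define Q where "Q p = real_plan hist mus (fst p) (snd p)" for p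
  define l where "l p = lt t (dep (fst p)) \<omega>" for p :: "'x \<times> 'a"
  have S: "finite S" "\<And>p. p \<in> S \<Longrightarrow> fst p \<in> X \<and> snd p \<in> Act (fst p)"
    using game_structD(1,2)[OF game] unfolding S_def by auto
  have est: "est_loss t (fst p) (snd p) \<omega> = (if visits t (fst p) (snd p) \<omega> then l p / Q p else 0)" for p
    unfolding est_loss_def l_def Q_def by simp
  have Pl: "0 \<le> P p * l p" "P p * l p \<le> 1" "0 < Q p" if "p \<in> S" for p
    using real_plan_nonneg_le_one[OF game mu_policy[OF t \<omega>]] traj_valid[OF t _ \<omega>, of "dep (fst p)"]
      real_plan_pos[OF game mus_pos] S(2)[OF that] game_structD(4)[OF game]
    unfolding P_def l_def Q_def by (auto simp: mult_le_one)
  have "(\<Sum>p\<in>S. P p * est_loss t (fst p) (snd p) \<omega>)\<^sup>2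
      \<le> real H * (\<Sum>p\<in>S. if visits t (fst p) (snd p) \<omega> then (P p * l p / Q p)\<^sup>2 else 0)"
    using square_sum_if_le_card[OF S(1) card_visits[unfolded S_def[symmetric]], of t \<omega> "\<lambda>p. P p * l p / Q p"]
    by (simp add: est if_distrib[of "(*) _"] cong: if_cong)
  also have "\<dots> \<le> real H * (\<Sum>p\<in>S. P p * est_loss t (fst p) (snd p) \<omega> / Q p)"
  proof (intro mult_left_mono sum_mono)
    fix p assume "p \<in> S"
    have "(P p * l p)\<^sup>2 / (Q p)\<^sup>2 \<le> P p * l p / (Q p)\<^sup>2"
      using Pl[OF \<open>p \<in> S\<close>] by (intro divide_right_mono) (auto simp: power2_eq_square mult_left_le)
    then show "(if visits t (fst p) (snd p) \<omega> then (P p * l p / Q p)\<^sup>2 else 0)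
        \<le> P p * est_loss t (fst p) (snd p) \<omega> / Q p"
      by (simp add: est power_divide power2_eq_square)
  qed simp
  finally show ?thesis
    unfolding S_def P_def Q_def .
qed

lemma iterate_deviation_eq:
  "iterate_deviation \<eta> t \<omega> =
     \<eta> * (\<Sum>p\<in>Sigma X Act. real_plan hist (mu t \<omega>) (fst p) (snd p) * true_loss t (fst p) (snd p) \<omega>)
     - \<eta> * (\<Sum>p\<in>Sigma X Act. real_plan hist (mu t \<omega>) (fst p) (snd p) * est_loss t (fst p) (snd p) \<omega>)
     - \<eta>\<^sup>2 * real H / 2 * kappa X Act hist mus"
  unfolding iterate_deviation_def ip_diff_left ip_eq_sum_Sigma[OF game]
  by (simp add: algebra_simps)

lemma iterate_variance_le_kappa:
  assumes t: "t \<in> {1..T}" and \<omega>: "\<omega> \<in> space M"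
  shows "(\<Sum>p\<in>Sigma X Act. real_plan hist (mu t \<omega>) (fst p) (snd p) * true_loss t (fst p) (snd p) \<omega>
      / real_plan hist mus (fst p) (snd p)) \<le> kappa X Act hist mus"
proof -
  have "(\<Sum>p\<in>Sigma X Act. real_plan hist (mu t \<omega>) (fst p) (snd p) * true_loss t (fst p) (snd p) \<omega>
      / real_plan hist mus (fst p) (snd p))
      \<le> (\<Sum>p\<in>Sigma X Act. real_plan hist (mu t \<omega>) (fst p) (snd p) / real_plan hist mus (fst p) (snd p))"
    using real_plan_nonneg_le_one(1)[OF game mu_policy[OF t \<omega>]] real_plan_pos[OF game mus_pos] true_loss_bounds
    by (intro sum_mono divide_right_mono) (auto simp: mult_left_le less_imp_le)
  also have "\<dots> \<le> kappa X Act hist mus"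
    using sum_real_plan_div_le_kappa[OF game mus_pos mu_policy[OF t \<omega>]]
    unfolding sum_sum_eq_sum_Sigma[OF game] .
  finally show ?thesis .
qed

text \<open>The weights of the Freedman bound are \<open>\<mu>\<^sup>t\<^sub>1\<^sub>: / \<mu>\<^sup>s\<^sub>1\<^sub>:\<close> and \<open>\<mu>\<^sup>t\<^sub>1\<^sub>: / (\<mu>\<^sup>s\<^sub>1\<^sub>:)\<^sup>2\<close>, applied to
  the estimated and true losses rescaled by \<open>\<mu>\<^sup>s\<^sub>1\<^sub>:\<close> into \<open>[0, 1]\<close>.\<close>

lemma iterate_deviation_cond_exp:
  assumes t: "t \<in> {1..T}" and \<eta>: "0 \<le> \<eta>"
  shows "AE \<omega> in M. real_cond_exp M (F (t - 1)) (\<lambda>\<omega>. exp (iterate_deviation \<eta> t \<omega>)) \<omega> \<le> 1"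
proof -
  interpret finite_measure_subalgebra M "F (t - 1)"
    by (rule finite_measure_subalgebra_prev[OF t])
  define S where "S = Sigma X Act"
  define Q where "Q p = real_plan hist mus (fst p) (snd p)" for p
  define P where "P p \<omega> = real_plan hist (mu t \<omega>) (fst p) (snd p)" for p \<omega>
  define Bw where "Bw = (\<Sum>p\<in>S. 1 / Q p + 1 / (Q p)\<^sup>2)"
  have S: "finite S" "\<And>p. p \<in> S \<Longrightarrow> fst p \<in> X \<and> snd p \<in> Act (fst p)"
    using game_structD(1,2)[OF game] unfolding S_def by auto
  have Q: "0 < Q p" if "p \<in> S" for p
    using real_plan_pos[OF game mus_pos] S(2)[OF that] unfolding Q_def by auto
  have P: "0 \<le> P p \<omega> \<and> P p \<omega> \<le> 1" if "p \<in> S" "\<omega> \<in> space M" for p \<omega>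
    using real_plan_nonneg_le_one[OF game mu_policy[OF t that(2)]] S(2)[OF that(1)] unfolding P_def by auto
  have Bw: "1 / Q p + 1 / (Q p)\<^sup>2 \<le> Bw" if "p \<in> S" for p
    unfolding Bw_def using S(1) Q that by (intro member_le_sum) (auto simp: less_imp_le)
  have cancel: "(\<Sum>p\<in>S. P p \<omega> / Q p * (Q p * f p)) = (\<Sum>p\<in>S. P p \<omega> * f p)"
    "(\<Sum>p\<in>S. P p \<omega> / (Q p)\<^sup>2 * (Q p * f p)) = (\<Sum>p\<in>S. P p \<omega> * f p / Q p)" for f \<omega>
    using Q by (auto intro!: sum.cong simp: power2_eq_square less_imp_neq[symmetric])
  have "AE \<omega> in M. real_cond_exp M (F (t - 1)) (\<lambda>\<omega>. exp (\<eta> * (\<Sum>p\<in>S. P p \<omega> / Q p * (Q p * true_loss t (fst p) (snd p) \<omega>))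
      - \<eta> * (\<Sum>p\<in>S. P p \<omega> / Q p * (Q p * est_loss t (fst p) (snd p) \<omega>))
      - \<eta>\<^sup>2 * real H / 2 * kappa X Act hist mus)) \<omega> \<le> 1"
  proof (rule real_cond_exp_exp_lower_deviation_le_one[OF S(1) _ _ _ _ _ _ _ _ _ _ _ \<eta> of_nat_0_le_iff])
    fix p assume p: "p \<in> S"
    then have x: "fst p \<in> X" and a: "snd p \<in> Act (fst p)"
      using S(2) by auto
    show "(\<lambda>\<omega>. Q p * est_loss t (fst p) (snd p) \<omega>) \<in> borel_measurable M"
      using est_loss_measurable(2)[OF t x] by measurable
    show "AE \<omega> in M. real_cond_exp M (F (t - 1)) (\<lambda>\<omega>. Q p * est_loss t (fst p) (snd p) \<omega>) \<omega>
        = Q p * true_loss t (fst p) (snd p) \<omega>"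
      by (rule scaled_est_loss_cond_exp[OF t x a])
    show "(\<lambda>\<omega>. Q p * true_loss t (fst p) (snd p) \<omega>) \<in> borel_measurable (F (t - 1))"
      using true_loss_measurable[OF t x a] by measurable
    show "(\<lambda>\<omega>. P p \<omega> / Q p) \<in> borel_measurable (F (t - 1))"
      and "(\<lambda>\<omega>. P p \<omega> / (Q p)\<^sup>2) \<in> borel_measurable (F (t - 1))"
      using real_plan_iterate_measurable[OF t x a] unfolding P_def by (auto intro: borel_measurable_divide)
    fix \<omega> assume \<omega>: "\<omega> \<in> space M"
    show "0 \<le> Q p * est_loss t (fst p) (snd p) \<omega> \<and> Q p * est_loss t (fst p) (snd p) \<omega> \<le> 1"
      using est_loss_bounds[OF t \<omega> x a] Q[OF p] unfolding Q_def by auto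
    show "0 \<le> Q p * true_loss t (fst p) (snd p) \<omega> \<and> Q p * true_loss t (fst p) (snd p) \<omega> \<le> 1"
      using true_loss_bounds[OF x a] real_plan_nonneg_le_one(2)[OF game _ x a] mus_pos Q[OF p]
      unfolding Q_def positive_policy_def by (auto simp: mult_le_one)
    have "0 \<le> P p \<omega> / Q p" "P p \<omega> / Q p \<le> 1 / Q p" "0 \<le> P p \<omega> / (Q p)\<^sup>2"
      "P p \<omega> / (Q p)\<^sup>2 \<le> 1 / (Q p)\<^sup>2" "0 \<le> 1 / Q p" "0 \<le> 1 / (Q p)\<^sup>2"
      using P[OF p \<omega>] Q[OF p] by (simp_all add: divide_right_mono)
    with Bw[OF p] show "0 \<le> P p \<omega> / Q p \<and> P p \<omega> / Q p \<le> Bw"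
      "0 \<le> P p \<omega> / (Q p)\<^sup>2 \<and> P p \<omega> / (Q p)\<^sup>2 \<le> Bw"
      by linarith+
  qed (simp_all only: cancel, unfold S_def P_def Q_def,
      auto intro: iterate_est_loss_square_le[OF t] iterate_variance_le_kappa[OF t])
  moreover have "iterate_deviation \<eta> t \<omega> =
      \<eta> * (\<Sum>p\<in>S. P p \<omega> / Q p * (Q p * true_loss t (fst p) (snd p) \<omega>))
      - \<eta> * (\<Sum>p\<in>S. P p \<omega> / Q p * (Q p * est_loss t (fst p) (snd p) \<omega>))
      - \<eta>\<^sup>2 * real H / 2 * kappa X Act hist mus" for \<omega>
    by (simp only: cancel) (simp add: iterate_deviation_eq S_def P_def)
  ultimately show ?thesis
    by simp
qed

lemma iterate_deviation_measurable:
  assumes t: "t \<in> {1..T}"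
  shows "iterate_deviation \<eta> t \<in> borel_measurable (F t)"
proof -
  have S: "\<And>p. p \<in> Sigma X Act \<Longrightarrow> fst p \<in> X \<and> snd p \<in> Act (fst p)"
    by auto
  have "(\<lambda>\<omega>. real_plan hist (mu t \<omega>) (fst p) (snd p) * true_loss t (fst p) (snd p) \<omega>) \<in> borel_measurable (F t)"
    "(\<lambda>\<omega>. real_plan hist (mu t \<omega>) (fst p) (snd p) * est_loss t (fst p) (snd p) \<omega>) \<in> borel_measurable (F t)"
    if "p \<in> Sigma X Act" for p
    using measurable_prev(1)[OF t real_plan_iterate_measurable[OF t]] measurable_prev(1)[OF t true_loss_measurable[OF t]]
      est_loss_measurable(1)[OF t] S[OF that] by (auto intro: borel_measurable_times)
  then have "(\<lambda>\<omega>. \<Sum>p\<in>Sigma X Act. real_plan hist (mu t \<omega>) (fst p) (snd p) * true_loss t (fst p) (snd p) \<omega>)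
      \<in> borel_measurable (F t)"
    "(\<lambda>\<omega>. \<Sum>p\<in>Sigma X Act. real_plan hist (mu t \<omega>) (fst p) (snd p) * est_loss t (fst p) (snd p) \<omega>)
      \<in> borel_measurable (F t)"
    by (auto intro!: borel_measurable_sum simp del: mem_Sigma_iff)
  then show "iterate_deviation \<eta> t \<in> borel_measurable (F t)"
    unfolding iterate_deviation_eq[abs_def] by measurable
qed

lemma iterate_deviation_tail:
  assumes \<eta>: "0 \<le> \<eta>"
  shows "measure M {\<omega> \<in> space M. \<iota> \<le> (\<Sum>t\<in>{1..T}. iterate_deviation \<eta> t \<omega>)} \<le> exp (- \<iota>)"
proof (rule exp_sum_adapted_tail_bound[OF filt_sub filt_mono,
      where Z = "iterate_deviation \<eta>" and C = "\<eta> * real (card (Sigma X Act))"])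
  fix t assume t: "t \<in> {1..T}"
  show "AE \<omega> in M. real_cond_exp M (F (t - 1)) (\<lambda>\<omega>. exp (iterate_deviation \<eta> t \<omega>)) \<omega> \<le> 1"
    by (rule iterate_deviation_cond_exp[OF t \<eta>])
  show "iterate_deviation \<eta> t \<in> borel_measurable (F t)"
    by (rule iterate_deviation_measurable[OF t])
  fix \<omega> assume \<omega>: "\<omega> \<in> space M"
  have "(\<Sum>p\<in>Sigma X Act. real_plan hist (mu t \<omega>) (fst p) (snd p) * true_loss t (fst p) (snd p) \<omega>)
      \<le> (\<Sum>p\<in>Sigma X Act. 1)"
    using real_plan_nonneg_le_one[OF game mu_policy[OF t \<omega>]] true_loss_bounds
    by (intro sum_mono) (auto simp: mult_le_one)
  moreover have "0 \<le> (\<Sum>p\<in>Sigma X Act. real_plan hist (mu t \<omega>) (fst p) (snd p) * est_loss t (fst p) (snd p) \<omega>)"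
    using real_plan_nonneg_le_one[OF game mu_policy[OF t \<omega>]] est_loss_bounds[OF t \<omega>]
    by (intro sum_nonneg) auto
  moreover have "0 \<le> kappa X Act hist mus"
    using num_actions_le_kappa[OF game mus_pos] by linarith
  ultimately show "iterate_deviation \<eta> t \<omega> \<le> \<eta> * real (card (Sigma X Act))"
    unfolding iterate_deviation_eq using \<eta> mult_left_mono[of _ _ \<eta>]
    by (smt (verit) mult_nonneg_nonneg of_nat_0_le_iff zero_le_power2 divide_nonneg_nonneg real_of_card)
qed

lemma regret_measurable:
  assumes f: "\<And>t x a. t \<in> {1..T} \<Longrightarrow> x \<in> X \<Longrightarrow> a \<in> Act x \<Longrightarrow> (\<lambda>\<omega>. f t x a \<omega>) \<in> borel_measurable M"
  shows "(\<lambda>\<omega>. regret X Act hist T (\<lambda>t x a. f t x a \<omega>) (\<lambda>t. mu t \<omega>)) \<in> borel_measurable M"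
proof -
  have fin: "finite (PiE X Act)"
    using game_structD(1,2)[OF game] by (intro finite_PiE) auto
  have plan: "(\<lambda>\<omega>. real_plan hist (mu t \<omega>) x a) \<in> borel_measurable M"
    if "t \<in> {1..T}" "x \<in> X" "a \<in> Act x" for t x a
    using measurable_prev(2)[OF that(1) real_plan_iterate_measurable[OF that]] .
  show ?thesis
    unfolding regret_eq_Max_pure(1)[OF game] ip_def
    using fin f plan by (intro borel_measurable_Max borel_measurable_sum borel_measurable_times
        borel_measurable_diff borel_measurable_const) auto
qed

definition large_deviation_event :: "real \<Rightarrow> real \<Rightarrow> real \<Rightarrow> 'w set" where
  "large_deviation_event \<eta> \<gamma> \<iota> =
     {\<omega> \<in> space M. \<iota> \<le> (\<Sum>t\<in>{1..T}. iterate_deviation \<eta> t \<omega>)} \<union>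
     (\<Union>p\<in>Sigma X Act. {\<omega> \<in> space M. \<iota> \<le> (\<Sum>t\<in>{1..T}. coordinate_deviation \<gamma> (fst p) (snd p) t \<omega>)})"

lemma regret_le_outside_large_deviation_event:
  assumes s: "0 < s" "s\<^sup>2 = \<iota> * real H * kappa X Act hist mus * real T" and \<iota>: "0 < \<iota>"
    and \<omega>: "\<omega> \<in> space M - large_deviation_event (\<iota> / s) (min 1 (s / (real H * real T))) \<iota>"
    and true_le: "\<And>t. t \<in> {1..T} \<Longrightarrow> ip X Act (\<lambda>x a. true_loss t x a \<omega>) (real_plan hist mus) \<le> real H"
  shows "regret X Act hist T (\<lambda>t x a. true_loss t x a \<omega>) (\<lambda>t. mu t \<omega>)
      \<le> max (regret X Act hist T (\<lambda>t x a. est_loss t x a \<omega>) (\<lambda>t. mu t \<omega>)) 0 + 4 * s"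
proof -
  have \<omega>M: "\<omega> \<in> space M"
    and iterates: "(\<Sum>t\<in>{1..T}. iterate_deviation (\<iota> / s) t \<omega>) < \<iota>"
    and coords: "\<And>x a. x \<in> X \<Longrightarrow> a \<in> Act x \<Longrightarrow>
      (\<Sum>t\<in>{1..T}. coordinate_deviation (min 1 (s / (real H * real T))) x a t \<omega>) < \<iota>"
    using \<omega> unfolding large_deviation_event_def by (auto simp: not_le)
  show ?thesis
  proof (rule regret_le_of_concentration[OF game mus_pos s \<iota>])
    define \<kappa> where "\<kappa> = kappa X Act hist mus"
    define D where "D = (\<Sum>t\<in>{1..T}. ip X Act (\<lambda>x a. true_loss t x a \<omega> - est_loss t x a \<omega>) (real_plan hist (mu t \<omega>)))"
    have "(\<Sum>t\<in>{1..T}. iterate_deviation (\<iota> / s) t \<omega>) = \<iota> / s * D - real T * ((\<iota> / s)\<^sup>2 * real H / 2 * \<kappa>)"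
      unfolding iterate_deviation_def D_def \<kappa>_def by (simp add: sum_subtractf sum_distrib_left)
    also have "real T * ((\<iota> / s)\<^sup>2 * real H / 2 * \<kappa>) = (\<iota> / s)\<^sup>2 / 2 * (\<iota> * real H * \<kappa> * real T) / \<iota>"
      using \<iota> by (simp add: field_simps)
    also have "\<dots> = \<iota> / 2"
      unfolding s(2)[unfolded \<kappa>_def[symmetric], symmetric] using s(1) \<iota> by (simp add: field_simps power2_eq_square)
    finally have "\<iota> / s * D - \<iota> / 2 < \<iota>"
      using iterates by simp
    then show "D \<le> 3 / 2 * s"
      using s \<iota> by (simp add: field_simps)
  next
    fix x a assume HT: "s \<le> real H * real T" and x: "x \<in> X" and a: "a \<in> Act x"
    define \<gamma> where "\<gamma> = s / (real H * real T)"
    define Q where "Q = real_plan hist mus x a"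
    have \<gamma>: "0 < \<gamma>" "min 1 (s / (real H * real T)) = \<gamma>"
      using HT s unfolding \<gamma>_def by (auto simp: field_simps)
    have Q: "0 < Q"
      unfolding Q_def by (rule real_plan_pos[OF game mus_pos x a])
    have "\<gamma> * Q * ((\<Sum>t\<in>{1..T}. est_loss t x a \<omega>) - (1 + \<gamma>) * (\<Sum>t\<in>{1..T}. true_loss t x a \<omega>)) < \<iota>"
      using coords[OF x a] unfolding \<gamma>(2) coordinate_deviation_def Q_def[symmetric]
      by (simp add: sum_subtractf sum_distrib_left[symmetric] right_diff_distrib)
    then show "(\<Sum>t\<in>{1..T}. est_loss t x a \<omega>) - (\<Sum>t\<in>{1..T}. true_loss t x a \<omega>)
        \<le> \<iota> / (s / (real H * real T) * real_plan hist mus x a)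
          + s / (real H * real T) * (\<Sum>t\<in>{1..T}. true_loss t x a \<omega>)"
      using \<gamma>(1) Q unfolding \<gamma>_def[symmetric] Q_def[symmetric] by (simp add: field_simps)
  qed (use true_loss_bounds true_le est_loss_ip_le[OF _ \<omega>M] sum_real_plan_div_le_kappa[OF game mus_pos] in auto)
qed

lemma large_deviation_event:
  assumes \<eta>: "0 \<le> \<eta>" and \<gamma>: "0 \<le> \<gamma>" "\<gamma> \<le> 1"
  shows "large_deviation_event \<eta> \<gamma> \<iota> \<in> sets M"
    and "measure M (large_deviation_event \<eta> \<gamma> \<iota>) \<le> (real (num_actions X Act) + 1) * exp (- \<iota>)"
proof -
  have fin: "finite (Sigma X Act)"
    using game_structD(1,2)[OF game] by auto
  have "iterate_deviation \<eta> t \<in> borel_measurable M" if "t \<in> {1..T}" for t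
    using measurable_filtration_M[OF _ iterate_deviation_measurable[OF that]] that by auto
  then have "(\<lambda>\<omega>. \<Sum>t\<in>{1..T}. iterate_deviation \<eta> t \<omega>) \<in> borel_measurable M"
    by (intro borel_measurable_sum) auto
  moreover have "(\<lambda>\<omega>. \<Sum>t\<in>{1..T}. coordinate_deviation \<gamma> (fst p) (snd p) t \<omega>) \<in> borel_measurable M"
    if "p \<in> Sigma X Act" for p
  proof (intro borel_measurable_sum)
    fix t assume "t \<in> {1..T}"
    then show "coordinate_deviation \<gamma> (fst p) (snd p) t \<in> borel_measurable M"
      using measurable_filtration_M[OF _ coordinate_deviation_measurable] that by auto
  qed
  ultimately have sets: "{\<omega> \<in> space M. \<iota> \<le> (\<Sum>t\<in>{1..T}. iterate_deviation \<eta> t \<omega>)} \<in> sets M"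
    "\<And>p. p \<in> Sigma X Act \<Longrightarrow> {\<omega> \<in> space M. \<iota> \<le> (\<Sum>t\<in>{1..T}. coordinate_deviation \<gamma> (fst p) (snd p) t \<omega>)} \<in> sets M"
    by measurable
  then show "large_deviation_event \<eta> \<gamma> \<iota> \<in> sets M"
    unfolding large_deviation_event_def using fin by auto
  have "measure M (large_deviation_event \<eta> \<gamma> \<iota>) \<le> exp (- \<iota>) + (\<Sum>p\<in>Sigma X Act. exp (- \<iota>))"
    unfolding large_deviation_event_def using fin sets iterate_deviation_tail[OF \<eta>] coordinate_deviation_tail[OF _ _ \<gamma>]
    by (intro order_trans[OF measure_Un_le] add_mono order_trans[OF measure_UNION_le] sum_mono) auto
  also have "\<dots> = (real (num_actions X Act) + 1) * exp (- \<iota>)"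
    unfolding num_actions_def using game_structD(1,2)[OF game] by (simp add: algebra_simps)
  finally show "measure M (large_deviation_event \<eta> \<gamma> \<iota>) \<le> (real (num_actions X Act) + 1) * exp (- \<iota>)" .
qed

lemma num_actions_ge_one:
  assumes "T \<noteq> 0"
  shows "1 \<le> num_actions X Act"
proof -
  obtain \<omega> where "\<omega> \<in> space M"
    using not_empty by blast
  then obtain x where x: "x \<in> X"
    using traj_valid[of 1 1 \<omega>] assms game_structD(5)[OF game] by auto
  have "1 \<le> card (Act x)"
    using game_structD(2,3)[OF game x] by (simp add: Suc_le_eq card_gt_0_iff)
  also have "\<dots> \<le> num_actions X Act"
    unfolding num_actions_def using x game_structD(1)[OF game] by (intro member_le_sum) auto
  finally show ?thesis .
qed

lemma regret_comparison_event_measurable: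
  "{\<omega> \<in> space M. regret X Act hist T (\<lambda>t x a. true_loss t x a \<omega>) (\<lambda>t. mu t \<omega>)
      \<le> max (regret X Act hist T (\<lambda>t x a. est_loss t x a \<omega>) (\<lambda>t. mu t \<omega>)) 0 + c} \<in> sets M"
proof -
  have "(\<lambda>\<omega>. regret X Act hist T (\<lambda>t x a. true_loss t x a \<omega>) (\<lambda>t. mu t \<omega>)) \<in> borel_measurable M"
    "(\<lambda>\<omega>. regret X Act hist T (\<lambda>t x a. est_loss t x a \<omega>) (\<lambda>t. mu t \<omega>)) \<in> borel_measurable M"
    using measurable_prev(2)[OF _ true_loss_measurable] est_loss_measurable(2)
    by (auto intro!: regret_measurable)
  then show ?thesis
    by measurable
qed

theorem regret_le_estimated_regret:
  assumes \<delta>: "0 < \<delta>" "\<delta> < 1"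
  defines "\<iota> \<equiv> ln ((real (num_actions X Act) + 1) / \<delta>)"
  shows "1 - \<delta> \<le> measure M {\<omega> \<in> space M.
           regret X Act hist T (\<lambda>t x a. true_loss t x a \<omega>) (\<lambda>t. mu t \<omega>)
           \<le> max (regret X Act hist T (\<lambda>t x a. est_loss t x a \<omega>) (\<lambda>t. mu t \<omega>)) 0
             + 4 * sqrt (\<iota> * real H * kappa X Act hist mus * real T)}"
    (is "_ \<le> measure M ?good")
proof (cases "T = 0")
  case True
  then have "?good = space M"
    using mus_pos unfolding regret_def positive_policy_def by auto
  then show ?thesis
    using \<delta> by (simp add: prob_space)
next
  case False
  define s where "s = sqrt (\<iota> * real H * kappa X Act hist mus * real T)"
  have exp_\<iota>: "exp \<iota> = (real (num_actions X Act) + 1) / \<delta>"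
    unfolding \<iota>_def using \<delta> by simp
  have "1 < exp \<iota>"
    unfolding exp_\<iota> using \<delta> by (simp add: field_simps)
  then have pos: "0 < kappa X Act hist mus" "0 < \<iota>"
    using num_actions_le_kappa[OF game mus_pos] num_actions_ge_one[OF False] by auto
  then have s: "0 < s" "s\<^sup>2 = \<iota> * real H * kappa X Act hist mus * real T"
    unfolding s_def using False game_structD(5)[OF game] by auto
  txt \<open>The rates balance the two terms of each deviation bound: \<open>\<iota> / s\<close> makes the variance
    penalty \<open>\<iota> / 2\<close>, and \<open>s / (H T)\<close> equalises \<open>\<iota> \<kappa> / \<gamma>\<close> with \<open>\<gamma> H T\<close>.\<close>
  define B where "B = large_deviation_event (\<iota> / s) (min 1 (s / (real H * real T))) \<iota>"
  have "(real (num_actions X Act) + 1) * exp (- \<iota>) = \<delta>"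
    using exp_\<iota> \<delta> by (simp add: exp_minus field_simps)
  then have B: "B \<in> sets M" "measure M B \<le> \<delta>"
    using large_deviation_event[of "\<iota> / s" "min 1 (s / (real H * real T))" \<iota>] s pos
    unfolding B_def by auto
  have "AE \<omega> in M. \<omega> \<in> space M - B \<longrightarrow> \<omega> \<in> ?good"
    using AE_true_loss_ip_le
    by eventually_elim (use regret_le_outside_large_deviation_event[OF s pos(2)] in \<open>auto simp: B_def s_def\<close>)
  then have "measure M (space M - B) \<le> measure M ?good"
    using B(1) regret_comparison_event_measurable by (intro finite_measure_mono_AE) auto
  then show ?thesis
    using prob_compl[OF B(1)] B(2) by linarith
qed

end

theorem theorem2:
  fixes M :: "'w measure" and F :: "nat \<Rightarrow> 'w measure" and T :: nat and \<delta> :: real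
    and X :: "'x set" and Act :: "'x \<Rightarrow> 'a set" and dep :: "'x \<Rightarrow> nat" and H :: nat
    and hist :: "'x \<Rightarrow> ('x \<times> 'a) list"
    and mus :: "'x \<Rightarrow> 'a \<Rightarrow> real"
    and mu :: "nat \<Rightarrow> 'w \<Rightarrow> 'x \<Rightarrow> 'a \<Rightarrow> real"
    and nu :: "nat \<Rightarrow> 'w \<Rightarrow> 'n"
    and pnu :: "'n \<Rightarrow> 'x \<Rightarrow> real" and lnu :: "'n \<Rightarrow> 'x \<Rightarrow> 'a \<Rightarrow> real"
    and xt :: "nat \<Rightarrow> nat \<Rightarrow> 'w \<Rightarrow> 'x" and act :: "nat \<Rightarrow> nat \<Rightarrow> 'w \<Rightarrow> 'a"
    and lt :: "nat \<Rightarrow> nat \<Rightarrow> 'w \<Rightarrow> real"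
  assumes game: "game_struct X Act dep H hist"
    and prob: "prob_space M"
    and filt_sub: "\<And>t. t \<le> T \<Longrightarrow> subalgebra M (F t)"
    and filt_mono: "\<And>s t. s \<le> t \<Longrightarrow> t \<le> T \<Longrightarrow> sets (F s) \<subseteq> sets (F t)"
    and mus_pos: "positive_policy X Act mus"
    and pnu_range: "\<And>v x. x \<in> X \<Longrightarrow> 0 \<le> pnu v x \<and> pnu v x \<le> 1"
    and lnu_range: "\<And>v x a. x \<in> X \<Longrightarrow> a \<in> Act x \<Longrightarrow> 0 \<le> lnu v x a \<and> lnu v x a \<le> 1"
    and mu_policy: "\<And>t \<omega>. t \<in> {1..T} \<Longrightarrow> \<omega> \<in> space M \<Longrightarrow> mu t \<omega> \<in> policies X Act"
    and mu_meas: "\<And>t x a. t \<in> {1..T} \<Longrightarrow> x \<in> X \<Longrightarrow> a \<in> Act x \<Longrightarrow>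
                     (\<lambda>\<omega>. mu t \<omega> x a) \<in> borel_measurable (F (t - 1))"
    and nu_meas_p: "\<And>t x. t \<in> {1..T} \<Longrightarrow> x \<in> X \<Longrightarrow>
                     (\<lambda>\<omega>. pnu (nu t \<omega>) x) \<in> borel_measurable (F (t - 1))"
    and nu_meas_l: "\<And>t x a. t \<in> {1..T} \<Longrightarrow> x \<in> X \<Longrightarrow> a \<in> Act x \<Longrightarrow>
                     (\<lambda>\<omega>. lnu (nu t \<omega>) x a) \<in> borel_measurable (F (t - 1))"
    and traj_meas_x: "\<And>t h. t \<in> {1..T} \<Longrightarrow> h \<in> {1..H} \<Longrightarrow> xt t h \<in> measurable (F t) (count_space UNIV)"
    and traj_meas_a: "\<And>t h. t \<in> {1..T} \<Longrightarrow> h \<in> {1..H} \<Longrightarrow> act t h \<in> measurable (F t) (count_space UNIV)"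
    and traj_meas_l: "\<And>t h. t \<in> {1..T} \<Longrightarrow> h \<in> {1..H} \<Longrightarrow> lt t h \<in> borel_measurable (F t)"
    and traj_valid: "\<And>t h \<omega>. t \<in> {1..T} \<Longrightarrow> h \<in> {1..H} \<Longrightarrow> \<omega> \<in> space M \<Longrightarrow>
                     xt t h \<omega> \<in> X \<and> dep (xt t h \<omega>) = h \<and> act t h \<omega> \<in> Act (xt t h \<omega>)
                     \<and> 0 \<le> lt t h \<omega> \<and> lt t h \<omega> \<le> 1"
    and traj_prob: "\<And>t x a. t \<in> {1..T} \<Longrightarrow> x \<in> X \<Longrightarrow> a \<in> Act x \<Longrightarrow>
                     AE \<omega> in M. real_cond_exp M (F (t - 1))
                        (indicator {\<omega>' \<in> space M. xt t (dep x) \<omega>' = x \<and> act t (dep x) \<omega>' = a}) \<omega>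
                      = pnu (nu t \<omega>) x * real_plan hist mus x a"
    and traj_loss: "\<And>t x a. t \<in> {1..T} \<Longrightarrow> x \<in> X \<Longrightarrow> a \<in> Act x \<Longrightarrow>
                     AE \<omega> in M. real_cond_exp M (F (t - 1))
                        (\<lambda>\<omega>'. lt t (dep x) \<omega>' *
                           indicator {\<omega>'' \<in> space M. xt t (dep x) \<omega>'' = x \<and> act t (dep x) \<omega>'' = a} \<omega>') \<omega>
                      = pnu (nu t \<omega>) x * real_plan hist mus x a * lnu (nu t \<omega>) x a"
    and delta: "0 < \<delta>" "\<delta> < 1"
  shows "measure M {\<omega> \<in> space M.
           regret X Act hist T (\<lambda>t x a. pnu (nu t \<omega>) x * lnu (nu t \<omega>) x a) (\<lambda>t. mu t \<omega>)
           \<le> max (regret X Act hist T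
                     (\<lambda>t x a. if xt t (dep x) \<omega> = x \<and> act t (dep x) \<omega> = a
                              then lt t (dep x) \<omega> / real_plan hist mus x a else 0)
                     (\<lambda>t. mu t \<omega>)) 0
             + 4 * sqrt (ln ((real (num_actions X Act) + 1) / \<delta>) * real H * kappa X Act hist mus * real T)}
         \<ge> 1 - \<delta>"
proof -
  interpret sampled_game M F T X Act dep H hist mus mu nu pnu lnu xt act lt
    by (rule sampled_game.intro) (fact assms)+
  show ?thesis
    using regret_le_estimated_regret[OF delta] unfolding true_loss_def est_loss_def visits_def .
qed

end
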